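(* Fix positive integers $n_x$ and $N_h$, a scalar $\eta>0$, and matrices $A_j, B, C, C_J, L, \Delta A\in\mathbb{R}^{n_x\times n_x}$ with $B$, $C$ and $C_J$ invertible. Define, for $K\in\mathbb{R}^{n_x\times n_x}$, $$\bar q(K,\delta_j)\triangleq \eta\|K\|_F^2+\sum_{i=2}^{n_xN_h}\sigma_i(\kappa^{-1}),\qquad \kappa=F_p(K,\delta_j)F_r(K,\delta_j)^{-1},$$ with $F_p$ and $F_r$ as in the context. Then the function $K\mapsto\bar q(K,\delta_j)$ is strongly convex on $\mathbb{R}^{n_x\times n_x}$.
   Context: Here $\delta_j$ labels one fixed realization of a parametric uncertainty. $A_j$ is the plant system matrix under $\delta_j$, $B$ the input matrix, $C$ the measurement matrix, $C_J$ the performance output matrix, $L$ an observer gain, and $\Delta A$ a given matrix (the uncertainty perturbation of the system matrix). Set $A_{x,j}\triangleq A_j+BKC$ and $A_{e,j}\triangleq A_j-LC$. For $\upsilon\in\{x,e\}$, $F_{\upsilon a}\in\mathbb{R}^{n_xN_h\times n_xN_h}$ is the block lower-triangular matrix whose $(k,l)$ block ($k,l=1,\dots,N_h$, blocks of size $n_x\times n_x$) is $A_{\upsilon,j}^{k-l}B$ for $k\ge l$ and $0$ for $k<l$. Thus $F_{xa}=F_{xa}(K,\delta_j)$ depends on $K$, while $F_{ea}(\delta_j)$ does not. $F_{ex}(\delta_j)$ is the strictly block lower-triangular matrix whose $(k,l)$ block is $A_{e,j}^{k-l-1}\Delta A$ for $k>l$ and $0$ otherwise. Define $$F_p(K,\delta_j)=(I_{N_h}\otimes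 C_J)F_{xa}(K,\delta_j),\qquad F_r(K,\delta_j)=(I_{N_h}\otimes C)\big(F_{ea}(\delta_j)+F_{ex}(\delta_j)F_{xa}(K,\delta_j)\big).$$ $\|K\|_F$ is the Frobenius norm. $\sigma_1(M)\le\dots\le\sigma_{n_xN_h}(M)$ are the singular values of $M$ in nondecreasing order. *)

theory Defs
  imports "Jordan_Normal_Form.Matrix"
begin

definition minv :: "real mat \<Rightarrow> real mat" where
  "minv M = (SOME N. N \<in> carrier_mat (dim_col M) (dim_row M) \<and> M * N = 1\<^sub>m (dim_row M)
                        \<and> N * M = 1\<^sub>m (dim_col M))"

text \<open>Block matrix (nN x nN, blocks of size n x n) whose (k,l) block (0-based) is
  f k l if P k l and 0 otherwise.\<close>
definition block_mat :: "nat \<Rightarrow> nat \<Rightarrow> (nat \<Rightarrow> nat \<Rightarrow> bool) \<Rightarrow> (nat \<Rightarrow> nat \<Rightarrow> real mat) \<Rightarrow> real mat" where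
  "block_mat n N P f = mat (n * N) (n * N)
     (\<lambda>(r, c). if P (r div n) (c div n) then f (r div n) (c div n) $$ (r mod n, c mod n) else 0)"

definition kron_id :: "nat \<Rightarrow> nat \<Rightarrow> real mat \<Rightarrow> real mat" where
  "kron_id n N M = block_mat n N (\<lambda>k l. k = l) (\<lambda>k l. M)"

definition F_a :: "nat \<Rightarrow> nat \<Rightarrow> real mat \<Rightarrow> real mat \<Rightarrow> real mat" where
  "F_a n N Av B = block_mat n N (\<lambda>k l. l \<le> k) (\<lambda>k l. (Av ^\<^sub>m (k - l)) * B)"

definition F_ex :: "nat \<Rightarrow> nat \<Rightarrow> real mat \<Rightarrow> real mat \<Rightarrow> real mat" where
  "F_ex n N Ae DA = block_mat n N (\<lambda>k l. l < k) (\<lambda>k l. (Ae ^\<^sub>m (k - l - 1)) * DA)"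

definition F_p :: "nat \<Rightarrow> nat \<Rightarrow> real mat \<Rightarrow> real mat \<Rightarrow> real mat \<Rightarrow> real mat \<Rightarrow> real mat \<Rightarrow> real mat" where
  "F_p n N A B C CJ K = kron_id n N CJ * F_a n N (A + B * K * C) B"

definition F_r :: "nat \<Rightarrow> nat \<Rightarrow> real mat \<Rightarrow> real mat \<Rightarrow> real mat \<Rightarrow> real mat \<Rightarrow> real mat \<Rightarrow> real mat \<Rightarrow> real mat" where
  "F_r n N A B C L DA K = kron_id n N C *
     (F_a n N (A - L * C) B + F_ex n N (A - L * C) DA * F_a n N (A + B * K * C) B)"

definition frob_norm_sq :: "real mat \<Rightarrow> real" where
  "frob_norm_sq M = (\<Sum>i<dim_row M. \<Sum>j<dim_col M. (M $$ (i, j))\<^sup>2)"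

definition frob_norm :: "real mat \<Rightarrow> real" where
  "frob_norm M = sqrt (frob_norm_sq M)"

definition orthogonal_mat :: "nat \<Rightarrow> real mat \<Rightarrow> bool" where
  "orthogonal_mat m U \<longleftrightarrow> U \<in> carrier_mat m m \<and> transpose_mat U * U = 1\<^sub>m m"

definition diag_of_list :: "real list \<Rightarrow> real mat" where
  "diag_of_list s = mat (length s) (length s) (\<lambda>(i, j). if i = j then s ! i else 0)"

definition singular_values :: "real mat \<Rightarrow> real list" where
  "singular_values M = (THE s. length s = dim_row M \<and> sorted s \<and> (\<forall>x \<in> set s. 0 \<le> x) \<and>
      (\<exists>U V. orthogonal_mat (dim_row M) U \<and> orthogonal_mat (dim_row M) V \<and>
             M = U * diag_of_list s * transpose_mat V))"

text \<open>\<sigma>_i(M), 1-based index.\<close>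
definition sigma :: "real mat \<Rightarrow> nat \<Rightarrow> real" where
  "sigma M i = singular_values M ! (i - 1)"

definition q_bar :: "nat \<Rightarrow> nat \<Rightarrow> real \<Rightarrow> real mat \<Rightarrow> real mat \<Rightarrow> real mat \<Rightarrow> real mat \<Rightarrow> real mat \<Rightarrow> real mat
                      \<Rightarrow> real mat \<Rightarrow> real" where
  "q_bar n N \<eta> A B C CJ L DA K =
     (let \<kappa> = F_p n N A B C CJ K * minv (F_r n N A B C L DA K)
      in \<eta> * (frob_norm K)\<^sup>2 + (\<Sum>i = 2..n * N. sigma (minv \<kappa>) i))"

definition strongly_convex_on_mat :: "nat \<Rightarrow> nat \<Rightarrow> (real mat \<Rightarrow> real) \<Rightarrow> bool" where
  "strongly_convex_on_mat n m f \<longleftrightarrow> (\<exists>\<mu> > 0. \<forall>X \<in> carrier_mat n m. \<forall>Y \<in> carrier_mat n m.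
      \<forall>t::real. 0 \<le> t \<and> t \<le> 1 \<longrightarrow>
        f (t \<cdot>\<^sub>m X + (1 - t) \<cdot>\<^sub>m Y) \<le> t * f X + (1 - t) * f Y
          - (\<mu> / 2) * t * (1 - t) * (frob_norm (X - Y))\<^sup>2)"

end

theory Submission
  imports Defs "Jordan_Normal_Form.Schur_Decomposition"
begin

text \<open>With \<open>T(A)\<close> the block lower-triangular Toeplitz matrix with blocks \<open>A\<^sup>k\<^sup>-\<^sup>l\<close> and \<open>S\<close> the
  block down-shift, \<open>F\<^sub>x\<^sub>a = T(A\<^sub>x) (I \<otimes> B)\<close> and \<open>T(A)\<^sup>-\<^sup>1 = I - S \<otimes> A\<close>. Hence
  \<open>\<kappa>\<^sup>-\<^sup>1 = F\<^sub>r F\<^sub>p\<^sup>-\<^sup>1 = (I \<otimes> C) (T(A\<^sub>e) (I - S \<otimes> (A + B K C)) + F\<^sub>e\<^sub>x) (I \<otimes> C\<^sub>J\<^sup>-\<^sup>1)\<close>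
  is an affine function of \<open>K\<close>; \<open>F\<^sub>r\<close> is invertible because \<open>T(A\<^sub>e) + F\<^sub>e\<^sub>x T(A\<^sub>x)\<close> is
  block lower triangular with identity diagonal blocks.

  The sum \<open>\<sigma>\<^sub>2 + \<dots> + \<sigma>\<^sub>m\<close> of all but the smallest singular value is the maximum of
  \<open>\<Sum>\<^sub>i\<^sub>\<ge>\<^sub>2 (P\<^sup>T M Q)\<^sub>i\<^sub>i\<close> over orthogonal \<open>P\<close>, \<open>Q\<close> (a Ky Fan norm), hence convex in \<open>M\<close>, and
  so convex in \<open>K\<close>. Adding \<open>\<eta> \<parallel>K\<parallel>\<^sub>F\<^sup>2\<close>, whose defect under convex combination is exactly
  \<open>\<eta> t (1 - t) \<parallel>X - Y\<parallel>\<^sub>F\<^sup>2\<close>, gives strong convexity with modulus \<open>2 \<eta>\<close>.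

  The singular values are well defined: an SVD with nondecreasing diagonal is built by
  splitting off a smallest singular pair, and the diagonal is unique because its squares
  are the eigenvalues of \<open>M\<^sup>T M\<close>.\<close>

section \<open>Orthogonal and diagonal matrices\<close>

lemma index_mult_mat_sum:
  assumes "A \<in> carrier_mat nr k" "B \<in> carrier_mat k nc" "i < nr" "j < nc"
  shows "(A * B) $$ (i, j) = (\<Sum>l<k. A $$ (i, l) * B $$ (l, j))"
  using assms by (auto simp: scalar_prod_def lessThan_atLeast0 intro!: sum.cong)

lemma mult_carrier_mat_square [simp]:
  "A \<in> carrier_mat n n \<Longrightarrow> B \<in> carrier_mat n n \<Longrightarrow> A * B \<in> carrier_mat n n"
  by (rule mult_carrier_mat)

lemma mult_convex_comb_left:
  fixes P :: "'a :: comm_ring_1 mat"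
  assumes P: "P \<in> carrier_mat a b" and X: "X \<in> carrier_mat b c" and Y: "Y \<in> carrier_mat b c"
  shows "P * (t \<cdot>\<^sub>m X + (1 - t) \<cdot>\<^sub>m Y) = t \<cdot>\<^sub>m (P * X) + (1 - t) \<cdot>\<^sub>m (P * Y)"
  using mult_add_distrib_mat[OF P smult_carrier_mat[OF X] smult_carrier_mat[OF Y]]
  by (simp add: mult_smult_distrib[OF P X] mult_smult_distrib[OF P Y])

lemma mult_convex_comb_right:
  fixes Q :: "'a :: comm_ring_1 mat"
  assumes X: "X \<in> carrier_mat a b" and Y: "Y \<in> carrier_mat a b" and Q: "Q \<in> carrier_mat b c"
  shows "(t \<cdot>\<^sub>m X + (1 - t) \<cdot>\<^sub>m Y) * Q = t \<cdot>\<^sub>m (X * Q) + (1 - t) \<cdot>\<^sub>m (Y * Q)"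
  using add_mult_distrib_mat[OF smult_carrier_mat[OF X] smult_carrier_mat[OF Y] Q]
  by (simp add: mult_smult_assoc_mat[OF X Q] mult_smult_assoc_mat[OF Y Q])

lemma add_convex_comb_left:
  fixes Z :: "'a :: comm_ring_1 mat"
  assumes "Z \<in> carrier_mat a b" "X \<in> carrier_mat a b" "Y \<in> carrier_mat a b"
  shows "Z + (t \<cdot>\<^sub>m X + (1 - t) \<cdot>\<^sub>m Y) = t \<cdot>\<^sub>m (Z + X) + (1 - t) \<cdot>\<^sub>m (Z + Y)"
  by (rule eq_matI) (use assms in \<open>auto simp: algebra_simps\<close>)

lemma add_convex_comb_right:
  fixes Z :: "'a :: comm_ring_1 mat"
  assumes "Z \<in> carrier_mat a b" "X \<in> carrier_mat a b" "Y \<in> carrier_mat a b"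
  shows "(t \<cdot>\<^sub>m X + (1 - t) \<cdot>\<^sub>m Y) + Z = t \<cdot>\<^sub>m (X + Z) + (1 - t) \<cdot>\<^sub>m (Y + Z)"
  by (rule eq_matI) (use assms in \<open>auto simp: algebra_simps\<close>)

lemma orthogonal_mat_carrier: "orthogonal_mat m U \<Longrightarrow> U \<in> carrier_mat m m"
  by (simp add: orthogonal_mat_def)

lemma orthogonal_mat_transpose_mult: "orthogonal_mat m U \<Longrightarrow> transpose_mat U * U = 1\<^sub>m m"
  by (simp add: orthogonal_mat_def)

lemma orthogonal_mat_mult_transpose:
  assumes "orthogonal_mat m U"
  shows "U * transpose_mat U = 1\<^sub>m m"
  using assms mat_mult_left_right_inverse[of "transpose_mat U" m U]
  by (auto simp: orthogonal_mat_def)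

lemma orthogonal_mat_transpose: "orthogonal_mat m U \<Longrightarrow> orthogonal_mat m (transpose_mat U)"
  using orthogonal_mat_mult_transpose by (auto simp: orthogonal_mat_def)

lemma orthogonal_mat_one: "orthogonal_mat m (1\<^sub>m m)"
  by (simp add: orthogonal_mat_def)

lemma orthogonal_mat_mult:
  assumes U: "orthogonal_mat m U" and V: "orthogonal_mat m V"
  shows "orthogonal_mat m (U * V)"
proof -
  have Uc: "U \<in> carrier_mat m m" and Vc: "V \<in> carrier_mat m m"
    using U V by (auto simp: orthogonal_mat_def)
  have "transpose_mat (U * V) * (U * V) = transpose_mat V * (transpose_mat U * U) * V"
    using Uc Vc by (simp add: transpose_mult assoc_mult_mat[of _ m m _ m _ m])
  also have "\<dots> = 1\<^sub>m m"
    using U V Vc by (simp add: orthogonal_mat_transpose_mult)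
  finally show ?thesis using Uc Vc by (simp add: orthogonal_mat_def)
qed

lemma orthogonal_mat_col_scalar_prod:
  assumes U: "orthogonal_mat m U" and "i < m" "j < m"
  shows "col U i \<bullet> col U j = (if i = j then 1 else 0)"
proof -
  have "U \<in> carrier_mat m m" using U by (rule orthogonal_mat_carrier)
  then have "(transpose_mat U * U) $$ (i, j) = col U i \<bullet> col U j" using assms by simp
  then show ?thesis using orthogonal_mat_transpose_mult[OF U] assms by simp
qed

lemma orthogonal_mat_col_sum_squares:
  assumes U: "orthogonal_mat m U" and k: "k < m"
  shows "(\<Sum>i<m. (U $$ (i, k))\<^sup>2) = 1"
proof -
  have "U \<in> carrier_mat m m" using U by (rule orthogonal_mat_carrier)
  then have "col U k \<bullet> col U k = (\<Sum>i<m. (U $$ (i, k))\<^sup>2)"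
    using k by (simp add: scalar_prod_def power2_eq_square lessThan_atLeast0)
  then show ?thesis using orthogonal_mat_col_scalar_prod[OF U k k] by simp
qed

lemma orthogonal_mat_row_sum_squares:
  assumes U: "orthogonal_mat m U" and i: "i < m"
  shows "(\<Sum>k<m. (U $$ (i, k))\<^sup>2) = 1"
proof -
  have "U \<in> carrier_mat m m" using U by (rule orthogonal_mat_carrier)
  then show ?thesis
    using orthogonal_mat_col_sum_squares[OF orthogonal_mat_transpose[OF U] i] i by simp
qed

lemma diag_of_list_carrier [simp]: "diag_of_list s \<in> carrier_mat (length s) (length s)"
  and dim_diag_of_list [simp]: "dim_row (diag_of_list s) = length s" "dim_col (diag_of_list s) = length s"
  by (simp_all add: diag_of_list_def)

lemma index_diag_of_list:
  "i < length s \<Longrightarrow> j < length s \<Longrightarrow> diag_of_list s $$ (i, j) = (if i = j then s ! i else 0)"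
  by (simp add: diag_of_list_def)

lemma transpose_diag_of_list [simp]: "transpose_mat (diag_of_list s) = diag_of_list s"
  by (rule eq_matI) (auto simp: index_diag_of_list)

lemma diag_mat_diag_of_list [simp]: "diag_mat (diag_of_list s) = s"
  by (rule nth_equalityI) (auto simp: diag_mat_def index_diag_of_list)

lemma diag_of_list_mult_self: "diag_of_list s * diag_of_list s = diag_of_list (map (\<lambda>x. x\<^sup>2) s)"
proof (rule eq_matI)
  fix i j assume "i < dim_row (diag_of_list (map (\<lambda>x. x\<^sup>2) s))" "j < dim_col (diag_of_list (map (\<lambda>x. x\<^sup>2) s))"
  then have i: "i < length s" and j: "j < length s" by auto
  have "(diag_of_list s * diag_of_list s) $$ (i, j)
      = (\<Sum>k<length s. if k = i then (if i = j then (s ! i)\<^sup>2 else 0) else 0)"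
    unfolding index_mult_mat_sum[OF diag_of_list_carrier diag_of_list_carrier i j]
    by (rule sum.cong) (use i j in \<open>auto simp: index_diag_of_list power2_eq_square\<close>)
  then show "(diag_of_list s * diag_of_list s) $$ (i, j) = diag_of_list (map (\<lambda>x. x\<^sup>2) s) $$ (i, j)"
    using i j by (simp add: index_diag_of_list)
qed auto

lemma index_mult_diag_of_list_transpose:
  assumes P: "P \<in> carrier_mat m m" and Q: "Q \<in> carrier_mat m m" and len: "length s = m"
    and i: "i < m" and j: "j < m"
  shows "(P * diag_of_list s * transpose_mat Q) $$ (i, j) = (\<Sum>k<m. P $$ (i, k) * s ! k * Q $$ (j, k))"
proof -
  have PD: "(P * diag_of_list s) $$ (i, l) = P $$ (i, l) * s ! l" if l: "l < m" for l
  proof -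
    have "(P * diag_of_list s) $$ (i, l) = (\<Sum>k<m. if k = l then P $$ (i, k) * s ! l else 0)"
      unfolding index_mult_mat_sum[OF P diag_of_list_carrier[of s, unfolded len] i l]
      by (rule sum.cong) (use len l in \<open>auto simp: index_diag_of_list\<close>)
    then show ?thesis using l by simp
  qed
  have PDc: "P * diag_of_list s \<in> carrier_mat m m" using P len by auto
  show ?thesis
    unfolding index_mult_mat_sum[OF PDc transpose_carrier_mat[THEN iffD2, OF Q] i j]
    by (rule sum.cong) (use Q j in \<open>auto simp: PD\<close>)
qed

lemma col_mult_diag_of_list:
  assumes V: "V \<in> carrier_mat m m" and len: "length s = m" and j: "j < m"
  shows "col (V * diag_of_list s) j = (s ! j) \<cdot>\<^sub>v col V j"
proof (rule eq_vecI)
  fix i assume "i < dim_vec ((s ! j) \<cdot>\<^sub>v col V j)"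
  then have i: "i < m" using V by simp
  have "(V * diag_of_list s) $$ (i, j) = (\<Sum>k<m. if k = j then V $$ (i, j) * s ! j else 0)"
    unfolding index_mult_mat_sum[OF V diag_of_list_carrier[of s, unfolded len] i j]
    by (rule sum.cong) (use len j in \<open>auto simp: index_diag_of_list\<close>)
  then show "col (V * diag_of_list s) j $ i = ((s ! j) \<cdot>\<^sub>v col V j) $ i"
    using V len i j by simp
qed (use V len in simp)

definition scalar_block_mat :: "real \<Rightarrow> real mat \<Rightarrow> real mat" where
  "scalar_block_mat a W = four_block_mat (mat 1 1 (\<lambda>_. a)) (0\<^sub>m 1 (dim_col W)) (0\<^sub>m (dim_row W) 1) W"

lemma scalar_block_mat_carrier [simp]:
  "W \<in> carrier_mat k k \<Longrightarrow> scalar_block_mat a W \<in> carrier_mat (Suc k) (Suc k)"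
  by (auto simp: scalar_block_mat_def)

lemma dim_scalar_block_mat [simp]:
  "dim_row (scalar_block_mat a W) = Suc (dim_row W)" "dim_col (scalar_block_mat a W) = Suc (dim_col W)"
  by (simp_all add: scalar_block_mat_def)

lemma index_scalar_block_mat:
  "i < Suc (dim_row W) \<Longrightarrow> j < Suc (dim_col W) \<Longrightarrow> scalar_block_mat a W $$ (i, j) =
    (if i = 0 then if j = 0 then a else 0 else if j = 0 then 0 else W $$ (i - 1, j - 1))"
  by (simp add: scalar_block_mat_def)

lemma scalar_block_mat_mult:
  assumes W: "W \<in> carrier_mat k k" and X: "X \<in> carrier_mat k k"
  shows "scalar_block_mat a W * scalar_block_mat b X = scalar_block_mat (a * b) (W * X)"
proof -
  have ab: "mat 1 1 (\<lambda>_. a) * mat 1 1 (\<lambda>_. b) = mat 1 1 (\<lambda>_. a * b)"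
    by (rule eq_matI) (auto simp: scalar_prod_def)
  have dims: "dim_row W = k" "dim_col W = k" "dim_row X = k" "dim_col X = k"
    using W X by auto
  show ?thesis
    unfolding scalar_block_mat_def dims
    by (subst mult_four_block_mat[of "mat 1 1 (\<lambda>_. a)" 1 1 "0\<^sub>m 1 k" k "0\<^sub>m k 1" k W
          "mat 1 1 (\<lambda>_. b)" 1 "0\<^sub>m 1 k" k "0\<^sub>m k 1" X]) (use W X ab in auto)
qed

lemma transpose_scalar_block_mat:
  "W \<in> carrier_mat k k \<Longrightarrow> transpose_mat (scalar_block_mat a W) = scalar_block_mat a (transpose_mat W)"
  unfolding scalar_block_mat_def by (subst transpose_four_block_mat) auto

lemma scalar_block_mat_one: "scalar_block_mat 1 (1\<^sub>m k) = 1\<^sub>m (Suc k)"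
  by (rule eq_matI) (auto simp: index_scalar_block_mat)

lemma orthogonal_mat_scalar_block_mat:
  assumes W: "orthogonal_mat k W"
  shows "orthogonal_mat (Suc k) (scalar_block_mat 1 W)"
  using W orthogonal_mat_carrier[OF W]
  by (simp add: orthogonal_mat_def transpose_scalar_block_mat scalar_block_mat_mult scalar_block_mat_one)

lemma diag_of_list_Cons: "diag_of_list (a # s) = scalar_block_mat a (diag_of_list s)"
  by (rule eq_matI) (auto simp: index_scalar_block_mat index_diag_of_list nth_Cons')

lemma scalar_block_mat_of_first_row_col:
  assumes A: "A \<in> carrier_mat (Suc k) (Suc k)"
    and col0: "\<And>i. i < Suc k \<Longrightarrow> A $$ (i, 0) = (if i = 0 then a else 0)"
    and row0: "\<And>j. j < Suc k \<Longrightarrow> A $$ (0, j) = (if j = 0 then a else 0)"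
  shows "A = scalar_block_mat a (mat k k (\<lambda>(i, j). A $$ (Suc i, Suc j)))"
proof (rule eq_matI)
  fix i j assume "i < dim_row (scalar_block_mat a (mat k k (\<lambda>(i, j). A $$ (Suc i, Suc j))))"
    "j < dim_col (scalar_block_mat a (mat k k (\<lambda>(i, j). A $$ (Suc i, Suc j))))"
  then have i: "i < Suc k" and j: "j < Suc k" by simp_all
  show "A $$ (i, j) = scalar_block_mat a (mat k k (\<lambda>(i, j). A $$ (Suc i, Suc j))) $$ (i, j)"
    using A col0[OF i] row0[OF j] i j by (cases i; cases j) (auto simp: index_scalar_block_mat)
qed (use A in auto)

lemma orthogonal_sandwich_eq_iff:
  assumes U: "orthogonal_mat m U" and V: "orthogonal_mat m V"
    and M: "M \<in> carrier_mat m m" and D: "D \<in> carrier_mat m m"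
  shows "transpose_mat U * M * V = D \<longleftrightarrow> M = U * D * transpose_mat V"
proof -
  have Uc: "U \<in> carrier_mat m m" and Vc: "V \<in> carrier_mat m m"
    using U V by (simp_all add: orthogonal_mat_carrier)
  have Ut: "transpose_mat U \<in> carrier_mat m m" and Vt: "transpose_mat V \<in> carrier_mat m m"
    using Uc Vc by simp_all
  have "U * (transpose_mat U * M * V) * transpose_mat V = (U * transpose_mat U) * M * (V * transpose_mat V)"
    using Uc Vc M by (simp add: assoc_mult_mat[of _ m m _ m _ m])
  also have "\<dots> = M"
    using M by (simp add: orthogonal_mat_mult_transpose[OF U] orthogonal_mat_mult_transpose[OF V])
  finally have "U * (transpose_mat U * M * V) * transpose_mat V = M" .
  moreover have "transpose_mat U * (U * D * transpose_mat V) * V = (transpose_mat U * U) * D * (transpose_mat V * V)"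
    using Uc Vc D by (simp add: assoc_mult_mat[of _ m m _ m _ m])
  then have "transpose_mat U * (U * D * transpose_mat V) * V = D"
    using D by (simp add: orthogonal_mat_transpose_mult[OF U] orthogonal_mat_transpose_mult[OF V])
  ultimately show ?thesis by metis
qed

section \<open>Singular value decomposition\<close>

lemma eigenvalue_of_real_symmetric_mat_is_real:
  fixes S :: "real mat"
  assumes S: "S \<in> carrier_mat m m" and sym: "transpose_mat S = S"
    and ev: "eigenvalue (map_mat complex_of_real S) c"
  shows "c \<in> \<real>"
proof -
  obtain w where w: "w \<in> carrier_vec m" "w \<noteq> 0\<^sub>v m" "map_mat complex_of_real S *\<^sub>v w = c \<cdot>\<^sub>v w"
    using ev S unfolding eigenvalue_def eigenvector_def by auto
  have Sw: "(\<Sum>j<m. complex_of_real (S $$ (i, j)) * w $ j) = c * w $ i" if i: "i < m" for i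
  proof -
    have "(map_mat complex_of_real S *\<^sub>v w) $ i = (\<Sum>j<m. complex_of_real (S $$ (i, j)) * w $ j)"
      using S w(1) i by (auto simp: scalar_prod_def lessThan_atLeast0 intro!: sum.cong)
    then show ?thesis using w(1,3) i by simp
  qed
  have symij: "S $$ (j, i) = S $$ (i, j)" if "i < m" "j < m" for i j
    using S that arg_cong[OF sym, of "\<lambda>A. A $$ (i, j)"] by simp
  define q where "q = (\<Sum>i<m. \<Sum>j<m. cnj (w $ i) * (complex_of_real (S $$ (i, j)) * w $ j))"
  define r where "r = (\<Sum>i<m. (cmod (w $ i))\<^sup>2)"
  have q_eq: "q = c * complex_of_real r"
  proof -
    have "q = (\<Sum>i<m. cnj (w $ i) * (c * w $ i))"
      unfolding q_def by (rule sum.cong) (simp_all add: sum_distrib_left[symmetric] Sw)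
    also have "\<dots> = c * complex_of_real r"
      unfolding r_def of_real_sum sum_distrib_left
      by (rule sum.cong) (simp_all add: complex_norm_square[unfolded of_real_power] algebra_simps)
    finally show ?thesis .
  qed
  have "cnj q = q"
  proof -
    have "cnj q = (\<Sum>i<m. \<Sum>j<m. w $ i * (complex_of_real (S $$ (i, j)) * cnj (w $ j)))"
      unfolding q_def by (simp add: cnj_sum)
    also have "\<dots> = (\<Sum>j<m. \<Sum>i<m. w $ i * (complex_of_real (S $$ (i, j)) * cnj (w $ j)))"
      by (rule sum.swap)
    also have "\<dots> = q"
      unfolding q_def by (intro sum.cong refl) (simp add: symij algebra_simps)
    finally show ?thesis .
  qed
  moreover obtain i0 where i0: "i0 < m" "w $ i0 \<noteq> 0"
    using w(1,2) by (metis eq_vecI carrier_vecD index_zero_vec)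
  then have "0 < r"
    unfolding r_def by (intro sum_pos2[of _ i0]) auto
  ultimately have "cnj c = c"
    using q_eq by (simp add: mult_right_cancel)
  then show ?thesis using Reals_cnj_iff by blast
qed

lemma real_symmetric_mat_has_eigenvalue:
  fixes S :: "real mat"
  assumes S: "S \<in> carrier_mat m m" and m: "0 < m" and sym: "transpose_mat S = S"
  shows "\<exists>l. eigenvalue S l"
proof -
  define Sc where "Sc = map_mat complex_of_real S"
  have Sc: "Sc \<in> carrier_mat m m" using S by (simp add: Sc_def)
  obtain as where cp: "char_poly Sc = (\<Prod>a\<leftarrow>as. [:-a, 1:])" and len: "length as = m"
    using char_poly_factorized[OF Sc] by blast
  obtain c rest where as: "as = c # rest" using len m by (cases as) auto
  have root: "poly (char_poly Sc) c = 0" unfolding cp as by simp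
  then have "eigenvalue Sc c" using eigenvalue_root_char_poly[OF Sc] by simp
  then have "c \<in> \<real>"
    unfolding Sc_def by (rule eigenvalue_of_real_symmetric_mat_is_real[OF S sym])
  then obtain l where cl: "c = complex_of_real l" by (metis Reals_cases)
  have "complex_of_real (poly (char_poly S) l) = poly (char_poly Sc) c"
    unfolding cl Sc_def of_real_hom.char_poly_hom[OF S] of_real_hom.poly_map_poly ..
  then have "poly (char_poly S) l = 0" using root by simp
  then show ?thesis using eigenvalue_root_char_poly[OF S] by blast
qed

lemma scalar_prod_self_real: "(v :: real vec) \<bullet> v = (\<Sum>i<dim_vec v. (v $ i)\<^sup>2)"
  by (simp add: scalar_prod_def power2_eq_square lessThan_atLeast0)

lemma scalar_prod_self_real_pos:
  assumes "(v :: real vec) \<in> carrier_vec m" "v \<noteq> 0\<^sub>v m"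
  shows "0 < v \<bullet> v"
proof -
  obtain i where "i < m" "v $ i \<noteq> 0"
    using assms by (metis eq_vecI carrier_vecD index_zero_vec)
  then show ?thesis
    using assms(1) unfolding scalar_prod_self_real by (intro sum_pos2[of _ i]) auto
qed

lemma scalar_prod_normalize_self:
  assumes "(v :: real vec) \<in> carrier_vec m" "v \<noteq> 0\<^sub>v m"
  shows "((1 / sqrt (v \<bullet> v)) \<cdot>\<^sub>v v) \<bullet> ((1 / sqrt (v \<bullet> v)) \<cdot>\<^sub>v v) = 1"
  using assms scalar_prod_self_real_pos[OF assms] by simp

lemma orthogonal_mat_normalized_cols:
  fixes ws :: "real vec list"
  assumes ws: "set ws \<subseteq> carrier_vec m" and len: "length ws = m"
    and orth: "\<And>i j. i < m \<Longrightarrow> j < m \<Longrightarrow> ws ! i \<bullet> ws ! j = 0 \<longleftrightarrow> i \<noteq> j"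
  shows "orthogonal_mat m (mat m m (\<lambda>(i, j). (ws ! j) $ i / sqrt (ws ! j \<bullet> ws ! j)))"
    (is "orthogonal_mat m ?U")
proof -
  have wsc: "ws ! i \<in> carrier_vec m" if "i < m" for i using ws len that by auto
  have pos: "0 < ws ! i \<bullet> ws ! i" if "i < m" for i
    using orth[OF that that] scalar_prod_self_real_pos[OF wsc[OF that]] by fastforce
  have Uc: "?U \<in> carrier_mat m m" by simp
  have "transpose_mat ?U * ?U = 1\<^sub>m m"
  proof (rule eq_matI)
    fix i j assume "i < dim_row (1\<^sub>m m)" "j < dim_col (1\<^sub>m m)"
    then have i: "i < m" and j: "j < m" by auto
    have "(transpose_mat ?U * ?U) $$ (i, j)
        = (\<Sum>k<m. (ws ! i) $ k * (ws ! j) $ k) / (sqrt (ws ! i \<bullet> ws ! i) * sqrt (ws ! j \<bullet> ws ! j))"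
      unfolding index_mult_mat_sum[OF transpose_carrier_mat[THEN iffD2, OF Uc] Uc i j] sum_divide_distrib
      by (rule sum.cong) (use i j in auto)
    also have "(\<Sum>k<m. (ws ! i) $ k * (ws ! j) $ k) = ws ! i \<bullet> ws ! j"
      using wsc[OF j] by (simp add: scalar_prod_def lessThan_atLeast0)
    finally show "(transpose_mat ?U * ?U) $$ (i, j) = 1\<^sub>m m $$ (i, j)"
      using orth[OF i j] pos[OF i] i j by (cases "i = j") auto
  qed (use Uc in auto)
  then show ?thesis using Uc unfolding orthogonal_mat_def by blast
qed

lemma orthogonal_mat_with_first_col:
  fixes u :: "real vec"
  assumes u: "u \<in> carrier_vec m" and uu: "u \<bullet> u = 1"
  obtains U where "orthogonal_mat m U" "col U 0 = u"
proof -
  have u0: "u \<noteq> 0\<^sub>v m" using u uu by auto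
  then have m: "0 < m" using u by (metis carrier_vecD eq_vecI gr0I less_nat_zero_code index_zero_vec(2))
  interpret cof_vec_space m "TYPE(real)" .
  obtain vs where b: "basis_completion u = u # vs"
    by (simp add: basis_completion_def Let_def)
  define ws where "ws = gram_schmidt m (basis_completion u)"
  have corth: "corthogonal ws" and ws: "set ws \<subseteq> carrier_vec m" and len: "length ws = m"
    using gram_schmidt_result[OF _ _ _ refl, of "basis_completion u", folded ws_def]
      basis_completion[OF u u0] by auto
  have "hd ws = u" unfolding ws_def b by (rule gram_schmidt_hd[OF u])
  then have ws0: "ws ! 0 = u" using len m by (cases ws) auto
  have "ws ! i \<bullet> ws ! j = 0 \<longleftrightarrow> i \<noteq> j" if "i < m" "j < m" for i j
  proof -
    have "conjugate (ws ! j) = ws ! j" by (rule eq_vecI) auto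
    then show ?thesis using corthogonalD[OF corth, of i j] that len by simp
  qed
  from orthogonal_mat_normalized_cols[OF ws len this] show ?thesis
    using u uu m by (intro that) (auto simp: ws0 intro!: eq_vecI)
qed

lemma real_symmetric_mat_min_eigenvalue:
  fixes S :: "real mat"
  assumes S: "S \<in> carrier_mat m m" and m: "0 < m" and sym: "transpose_mat S = S"
  obtains l where "eigenvalue S l" "\<And>\<mu>. eigenvalue S \<mu> \<Longrightarrow> l \<le> \<mu>"
proof -
  have E: "{x. eigenvalue S x} = {x. poly (char_poly S) x = 0}"
    using eigenvalue_root_char_poly[OF S] by blast
  have "char_poly S \<noteq> 0" using degree_monic_char_poly[OF S] by auto
  then have "finite {x. eigenvalue S x}" unfolding E by (rule poly_roots_finite)
  moreover have "{x. eigenvalue S x} \<noteq> {}"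
    using real_symmetric_mat_has_eigenvalue[OF S m sym] by auto
  ultimately show ?thesis
    using that[of "Min {x. eigenvalue S x}"] Min_in by auto
qed

lemma unit_eigenvector_exists:
  fixes S :: "real mat"
  assumes S: "S \<in> carrier_mat m m" and l: "eigenvalue S l"
  obtains v where "v \<in> carrier_vec m" "v \<bullet> v = 1" "S *\<^sub>v v = l \<cdot>\<^sub>v v"
proof -
  obtain w where w: "w \<in> carrier_vec m" "w \<noteq> 0\<^sub>v m" "S *\<^sub>v w = l \<cdot>\<^sub>v w"
    using l S unfolding eigenvalue_def eigenvector_def by auto
  show ?thesis
  proof
    show "(1 / sqrt (w \<bullet> w)) \<cdot>\<^sub>v w \<in> carrier_vec m" using w by simp
    show "((1 / sqrt (w \<bullet> w)) \<cdot>\<^sub>v w) \<bullet> ((1 / sqrt (w \<bullet> w)) \<cdot>\<^sub>v w) = 1"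
      by (rule scalar_prod_normalize_self[OF w(1,2)])
    show "S *\<^sub>v ((1 / sqrt (w \<bullet> w)) \<cdot>\<^sub>v w) = l \<cdot>\<^sub>v ((1 / sqrt (w \<bullet> w)) \<cdot>\<^sub>v w)"
      using w S by (simp add: mult_mat_vec smult_smult_assoc mult.commute)
  qed
qed

lemma singular_mat_transpose_kernel_unit_vec:
  fixes M :: "real mat"
  assumes M: "M \<in> carrier_mat m m" and v: "v \<in> carrier_vec m" "v \<noteq> 0\<^sub>v m" and Mv: "M *\<^sub>v v = 0\<^sub>v m"
  obtains u where "u \<in> carrier_vec m" "u \<bullet> u = 1" "transpose_mat M *\<^sub>v u = 0\<^sub>v m"
proof -
  have "det M = 0" using det_0_iff_vec_prod_zero[OF M] v Mv by blast
  then have "det (transpose_mat M) = 0" using det_transpose[OF M] by simp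
  then obtain w where w: "w \<in> carrier_vec m" "w \<noteq> 0\<^sub>v m" "transpose_mat M *\<^sub>v w = 0\<^sub>v m"
    using det_0_iff_vec_prod_zero[of "transpose_mat M"] M by auto
  show ?thesis
  proof
    show "(1 / sqrt (w \<bullet> w)) \<cdot>\<^sub>v w \<in> carrier_vec m" using w by simp
    show "((1 / sqrt (w \<bullet> w)) \<cdot>\<^sub>v w) \<bullet> ((1 / sqrt (w \<bullet> w)) \<cdot>\<^sub>v w) = 1"
      by (rule scalar_prod_normalize_self[OF w(1,2)])
    show "transpose_mat M *\<^sub>v ((1 / sqrt (w \<bullet> w)) \<cdot>\<^sub>v w) = 0\<^sub>v m"
      using w M by (auto simp: mult_mat_vec)
  qed
qed

lemma scalar_prod_self_mult_eigenvector:
  fixes M :: "real mat"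
  assumes M: "M \<in> carrier_mat m m" and v: "v \<in> carrier_vec m" "v \<bullet> v = 1"
    and ev: "transpose_mat M * M *\<^sub>v v = l \<cdot>\<^sub>v v"
  shows "(M *\<^sub>v v) \<bullet> (M *\<^sub>v v) = l"
proof -
  have "(M *\<^sub>v v) \<bullet> (M *\<^sub>v v) = (transpose_mat M *\<^sub>v (M *\<^sub>v v)) \<bullet> v"
    using transpose_vec_mult_scalar[OF M v(1), of "M *\<^sub>v v"] M v by simp
  also have "\<dots> = l" using ev M v by (simp add: assoc_mult_mat_vec)
  finally show ?thesis .
qed

lemma smallest_singular_pair:
  fixes M :: "real mat"
  assumes M: "M \<in> carrier_mat m m" and m: "0 < m"
  obtains \<sigma> u v where "0 \<le> \<sigma>" "u \<in> carrier_vec m" "v \<in> carrier_vec m" "u \<bullet> u = 1" "v \<bullet> v = 1"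
    "M *\<^sub>v v = \<sigma> \<cdot>\<^sub>v u" "transpose_mat M *\<^sub>v u = \<sigma> \<cdot>\<^sub>v v"
    "\<And>\<mu>. eigenvalue (transpose_mat M * M) \<mu> \<Longrightarrow> \<sigma>\<^sup>2 \<le> \<mu>"
proof -
  define S where "S = transpose_mat M * M"
  have Mt: "transpose_mat M \<in> carrier_mat m m" using M by simp
  have S: "S \<in> carrier_mat m m" unfolding S_def using M by simp
  have "transpose_mat S = S" unfolding S_def using M by (simp add: transpose_mult)
  then obtain l where l: "eigenvalue S l" and l_min: "\<And>\<mu>. eigenvalue S \<mu> \<Longrightarrow> l \<le> \<mu>"
    using real_symmetric_mat_min_eigenvalue[OF S m] by blast
  obtain v where v: "v \<in> carrier_vec m" and vv: "v \<bullet> v = 1" and Sv: "S *\<^sub>v v = l \<cdot>\<^sub>v v"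
    using unit_eigenvector_exists[OF S l] by blast
  have Mv: "M *\<^sub>v v \<in> carrier_vec m" using M v by simp
  have MtMv: "transpose_mat M *\<^sub>v (M *\<^sub>v v) = l \<cdot>\<^sub>v v"
    using Sv M v unfolding S_def by (simp add: assoc_mult_mat_vec)
  have Mv_sq: "(M *\<^sub>v v) \<bullet> (M *\<^sub>v v) = l"
    using scalar_prod_self_mult_eigenvector[OF M v vv] Sv unfolding S_def .
  show ?thesis
  proof (cases "M *\<^sub>v v = 0\<^sub>v m")
    case False
    define \<sigma> where "\<sigma> = sqrt l"
    have l_pos: "0 < l" using scalar_prod_self_real_pos[OF Mv False] Mv_sq by simp
    then have \<sigma>: "0 < \<sigma>" "\<sigma> * \<sigma> = l" unfolding \<sigma>_def by simp_all
    show ?thesis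
    proof (rule that[of \<sigma> "(1 / \<sigma>) \<cdot>\<^sub>v (M *\<^sub>v v)" v])
      show "((1 / \<sigma>) \<cdot>\<^sub>v (M *\<^sub>v v)) \<bullet> ((1 / \<sigma>) \<cdot>\<^sub>v (M *\<^sub>v v)) = 1"
        using scalar_prod_normalize_self[OF Mv False] Mv_sq unfolding \<sigma>_def by simp
      show "M *\<^sub>v v = \<sigma> \<cdot>\<^sub>v ((1 / \<sigma>) \<cdot>\<^sub>v (M *\<^sub>v v))"
        using \<sigma> Mv by (simp add: smult_smult_assoc)
      show "transpose_mat M *\<^sub>v ((1 / \<sigma>) \<cdot>\<^sub>v (M *\<^sub>v v)) = \<sigma> \<cdot>\<^sub>v v"
        using \<sigma> Mt Mv MtMv by (simp add: mult_mat_vec smult_smult_assoc flip: \<sigma>(2))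
      show "\<sigma>\<^sup>2 \<le> \<mu>" if "eigenvalue (transpose_mat M * M) \<mu>" for \<mu>
        using l_min that \<sigma> unfolding S_def by (simp add: power2_eq_square)
    qed (use \<sigma> v vv Mv in auto)
  next
    case True
    have "v \<noteq> 0\<^sub>v m" using vv v by auto
    then obtain u where u: "u \<in> carrier_vec m" "u \<bullet> u = 1" "transpose_mat M *\<^sub>v u = 0\<^sub>v m"
      by (rule singular_mat_transpose_kernel_unit_vec[OF M v _ True])
    have "l = 0" using Mv_sq True by simp
    show ?thesis
    proof (rule that[of 0 u v])
      show "(0::real)\<^sup>2 \<le> \<mu>" if "eigenvalue (transpose_mat M * M) \<mu>" for \<mu>
        using l_min that \<open>l = 0\<close> unfolding S_def by simp
    qed (use True u v vv in auto)
  qed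
qed

lemma orthogonal_sandwich_singular_pair:
  fixes M :: "real mat"
  assumes M: "M \<in> carrier_mat (Suc k) (Suc k)"
    and U: "orthogonal_mat (Suc k) U" and V: "orthogonal_mat (Suc k) V"
    and Mv: "M *\<^sub>v col V 0 = \<sigma> \<cdot>\<^sub>v col U 0" and Mtu: "transpose_mat M *\<^sub>v col U 0 = \<sigma> \<cdot>\<^sub>v col V 0"
  shows "transpose_mat U * M * V = scalar_block_mat \<sigma> (mat k k (\<lambda>(i, j). (transpose_mat U * M * V) $$ (Suc i, Suc j)))"
proof (rule scalar_block_mat_of_first_row_col)
  have Uc: "U \<in> carrier_mat (Suc k) (Suc k)" and Vc: "V \<in> carrier_mat (Suc k) (Suc k)"
    using U V by (simp_all add: orthogonal_mat_carrier)
  have colU: "col U i \<in> carrier_vec (Suc k)" and colV: "col V i \<in> carrier_vec (Suc k)" for i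
    using Uc Vc by (simp_all add: carrier_vecI)
  have entry: "(transpose_mat U * M * V) $$ (i, j) = col U i \<bullet> (M *\<^sub>v col V j)"
    if "i < Suc k" "j < Suc k" for i j
    using Uc M Vc that by (simp add: assoc_mult_mat[of _ "Suc k" "Suc k" _ "Suc k" _ "Suc k"] mult_mat_vec_def)
  show "transpose_mat U * M * V \<in> carrier_mat (Suc k) (Suc k)" using Uc M Vc by simp
  show "(transpose_mat U * M * V) $$ (i, 0) = (if i = 0 then \<sigma> else 0)" if i: "i < Suc k" for i
    using i Mv colU orthogonal_mat_col_scalar_prod[OF U i] by (simp add: entry)
  show "(transpose_mat U * M * V) $$ (0, j) = (if j = 0 then \<sigma> else 0)" if j: "j < Suc k" for j
  proof -
    have "col U 0 \<bullet> (M *\<^sub>v col V j) = (transpose_mat M *\<^sub>v col U 0) \<bullet> col V j"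
      using transpose_vec_mult_scalar[OF M colV colU] by simp
    then show ?thesis
      using j Mtu colV orthogonal_mat_col_scalar_prod[OF V, of 0 j]
      by (simp add: entry comm_scalar_prod[of "col V 0" "Suc k"])
  qed
qed

lemma svd_extend:
  fixes M :: "real mat"
  assumes M: "M \<in> carrier_mat (Suc k) (Suc k)"
    and U: "orthogonal_mat (Suc k) U" and V: "orthogonal_mat (Suc k) V"
    and M_block: "transpose_mat U * M * V = scalar_block_mat \<sigma> M'"
    and U': "orthogonal_mat k U'" and V': "orthogonal_mat k V'" and len: "length s = k"
    and M': "M' = U' * diag_of_list s * transpose_mat V'"
  shows "M = (U * scalar_block_mat 1 U') * diag_of_list (\<sigma> # s) * transpose_mat (V * scalar_block_mat 1 V')"
proof -
  have Uc: "U \<in> carrier_mat (Suc k) (Suc k)" and Vc: "V \<in> carrier_mat (Suc k) (Suc k)"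
    and U'c: "U' \<in> carrier_mat k k" and V'c: "V' \<in> carrier_mat k k"
    using U V U' V' by (simp_all add: orthogonal_mat_carrier)
  have D: "diag_of_list s \<in> carrier_mat k k" using len by auto
  have M'c: "M' \<in> carrier_mat k k" using U'c V'c D unfolding M' by simp
  have "transpose_mat (U * scalar_block_mat 1 U') * M * (V * scalar_block_mat 1 V')
      = transpose_mat (scalar_block_mat 1 U') * (transpose_mat U * M * V) * scalar_block_mat 1 V'"
    using Uc Vc U'c V'c M
    by (simp add: transpose_mult[of _ "Suc k" "Suc k" _ "Suc k"] assoc_mult_mat[of _ "Suc k" "Suc k" _ "Suc k" _ "Suc k"])
  also have "\<dots> = scalar_block_mat \<sigma> (transpose_mat U' * M' * V')"
    using U'c V'c M'c
    by (simp add: M_block transpose_scalar_block_mat scalar_block_mat_mult[of _ k] assoc_mult_mat[of _ k k _ k _ k])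
  also have "transpose_mat U' * M' * V' = diag_of_list s"
    using orthogonal_sandwich_eq_iff[OF U' V' M'c D] M' by blast
  finally have "transpose_mat (U * scalar_block_mat 1 U') * M * (V * scalar_block_mat 1 V') = diag_of_list (\<sigma> # s)"
    by (simp add: diag_of_list_Cons)
  then show ?thesis
    using orthogonal_mat_mult[OF U orthogonal_mat_scalar_block_mat[OF U']]
      orthogonal_mat_mult[OF V orthogonal_mat_scalar_block_mat[OF V']]
    by (subst (asm) orthogonal_sandwich_eq_iff[OF _ _ M]) (use len in auto)
qed

lemma transpose_mult_self_svd:
  fixes M :: "real mat"
  assumes U: "orthogonal_mat m U" and V: "orthogonal_mat m V" and len: "length s = m"
    and M: "M = U * diag_of_list s * transpose_mat V"
  shows "transpose_mat M * M = V * diag_of_list (map (\<lambda>x. x\<^sup>2) s) * transpose_mat V"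
proof -
  have Uc: "U \<in> carrier_mat m m" and Vc: "V \<in> carrier_mat m m"
    using U V by (simp_all add: orthogonal_mat_carrier)
  have D: "diag_of_list s \<in> carrier_mat m m" using len by auto
  have "transpose_mat M * M = V * diag_of_list s * (transpose_mat U * U) * diag_of_list s * transpose_mat V"
    using Uc Vc D unfolding M
    by (simp add: transpose_mult[of _ m m _ m] assoc_mult_mat[of _ m m _ m _ m])
  also have "\<dots> = V * (diag_of_list s * diag_of_list s) * transpose_mat V"
    using Vc D by (simp add: orthogonal_mat_transpose_mult[OF U] assoc_mult_mat[of _ m m _ m _ m]
        left_mult_one_mat[of _ m m])
  finally show ?thesis by (simp add: diag_of_list_mult_self)
qed

lemma svd_eigenvalue:
  fixes M :: "real mat"
  assumes U: "orthogonal_mat m U" and V: "orthogonal_mat m V" and len: "length s = m"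
    and M: "M = U * diag_of_list s * transpose_mat V" and j: "j < m"
  shows "eigenvalue (transpose_mat M * M) ((s ! j)\<^sup>2)"
proof -
  have Uc: "U \<in> carrier_mat m m" and Vc: "V \<in> carrier_mat m m"
    using U V by (simp_all add: orthogonal_mat_carrier)
  have S: "transpose_mat M * M \<in> carrier_mat m m" using Uc Vc len M by auto
  have D2: "diag_of_list (map (\<lambda>x. x\<^sup>2) s) \<in> carrier_mat m m" using len by auto
  have "transpose_mat M * M * V = V * diag_of_list (map (\<lambda>x. x\<^sup>2) s)"
    using Vc D2 len unfolding transpose_mult_self_svd[OF U V len M]
    by (simp add: assoc_mult_mat[of _ m m _ m _ m] orthogonal_mat_transpose_mult[OF V])
  then have "transpose_mat M * M *\<^sub>v col V j = (s ! j)\<^sup>2 \<cdot>\<^sub>v col V j"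
    using col_mult2[OF S Vc j] col_mult_diag_of_list[OF Vc _ j, of "map (\<lambda>x. x\<^sup>2) s"] len j by simp
  moreover have "col V j \<noteq> 0\<^sub>v m"
    using orthogonal_mat_col_scalar_prod[OF V j j] by auto
  ultimately show ?thesis
    using S Vc unfolding eigenvalue_def eigenvector_def by (auto intro!: exI[of _ "col V j"] carrier_vecI)
qed

lemma svd_le_singular_value:
  fixes M :: "real mat"
  assumes U: "orthogonal_mat m U" and V: "orthogonal_mat m V" and len: "length s = m"
    and M: "M = U * diag_of_list s * transpose_mat V"
    and \<sigma>_min: "\<And>\<mu>. eigenvalue (transpose_mat M * M) \<mu> \<Longrightarrow> \<sigma>\<^sup>2 \<le> \<mu>"
    and x: "x \<in> set s" "0 \<le> x"
  shows "\<sigma> \<le> x"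
proof -
  obtain j where "j < m" "x = s ! j" using x len by (metis in_set_conv_nth)
  then have "\<sigma>\<^sup>2 \<le> x\<^sup>2" using \<sigma>_min svd_eigenvalue[OF U V len M] by blast
  then show ?thesis using x by (auto intro: power2_le_imp_le)
qed

definition singular_value_list :: "nat \<Rightarrow> real mat \<Rightarrow> real list \<Rightarrow> bool" where
  "singular_value_list m M s \<longleftrightarrow> length s = m \<and> sorted s \<and> (\<forall>x\<in>set s. 0 \<le> x) \<and>
     (\<exists>U V. orthogonal_mat m U \<and> orthogonal_mat m V \<and> M = U * diag_of_list s * transpose_mat V)"

lemma singular_value_list_exists:
  fixes M :: "real mat"
  assumes "M \<in> carrier_mat m m"
  shows "\<exists>s. singular_value_list m M s"
  using assms
proof (induction m arbitrary: M)
  case 0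
  then have "M = 1\<^sub>m 0 * diag_of_list [] * transpose_mat (1\<^sub>m 0)"
    by (intro eq_matI) auto
  then show ?case
    unfolding singular_value_list_def using orthogonal_mat_one[of 0]
    by (intro exI[of _ "[]"] conjI exI[of _ "1\<^sub>m 0"]) auto
next
  case (Suc k)
  note M = Suc.prems
  obtain \<sigma> u v where \<sigma>: "0 \<le> \<sigma>" and u: "u \<in> carrier_vec (Suc k)"
    and v: "v \<in> carrier_vec (Suc k)" and uu: "u \<bullet> u = 1" and vv: "v \<bullet> v = 1"
    and Mv: "M *\<^sub>v v = \<sigma> \<cdot>\<^sub>v u" and Mtu: "transpose_mat M *\<^sub>v u = \<sigma> \<cdot>\<^sub>v v"
    and \<sigma>_min: "\<And>\<mu>. eigenvalue (transpose_mat M * M) \<mu> \<Longrightarrow> \<sigma>\<^sup>2 \<le> \<mu>"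
    by (fact smallest_singular_pair[OF M zero_less_Suc])
  obtain U where U: "orthogonal_mat (Suc k) U" and "col U 0 = u"
    by (rule orthogonal_mat_with_first_col[OF u uu])
  obtain V where V: "orthogonal_mat (Suc k) V" and "col V 0 = v"
    by (rule orthogonal_mat_with_first_col[OF v vv])
  define M' where "M' = mat k k (\<lambda>(i, j). (transpose_mat U * M * V) $$ (Suc i, Suc j))"
  have M_block: "transpose_mat U * M * V = scalar_block_mat \<sigma> M'"
    unfolding M'_def using \<open>col U 0 = u\<close> \<open>col V 0 = v\<close> Mv Mtu
    by (intro orthogonal_sandwich_singular_pair[OF M U V]) auto
  obtain s' U' V' where len: "length s' = k" and sorted: "sorted s'" and nonneg: "\<forall>x\<in>set s'. 0 \<le> x"
    and U': "orthogonal_mat k U'" and V': "orthogonal_mat k V'" and M': "M' = U' * diag_of_list s' * transpose_mat V'"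
    using Suc.IH[of M'] unfolding singular_value_list_def M'_def by auto
  let ?U = "U * scalar_block_mat 1 U'" and ?V = "V * scalar_block_mat 1 V'"
  have svd: "M = ?U * diag_of_list (\<sigma> # s') * transpose_mat ?V"
    by (rule svd_extend[OF M U V M_block U' V' len M'])
  have orth: "orthogonal_mat (Suc k) ?U" "orthogonal_mat (Suc k) ?V"
    using U V U' V' by (simp_all add: orthogonal_mat_mult orthogonal_mat_scalar_block_mat)
  have "\<sigma> \<le> x" if "x \<in> set s'" for x
    using svd_le_singular_value[OF orth _ svd, of \<sigma>] \<sigma>_min nonneg len that by auto
  then have "singular_value_list (Suc k) M (\<sigma> # s')"
    unfolding singular_value_list_def using \<sigma> len sorted nonneg orth
    by (intro conjI exI[of _ ?U] exI[of _ ?V] svd) auto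
  then show ?case ..
qed

lemma char_poly_orthogonal_similar_diag:
  assumes V: "orthogonal_mat m V" and len: "length t = m"
  shows "char_poly (V * diag_of_list t * transpose_mat V) = (\<Prod>a\<leftarrow>t. [:- a, 1:])"
proof -
  have Vc: "V \<in> carrier_mat m m" using V by (rule orthogonal_mat_carrier)
  have D: "diag_of_list t \<in> carrier_mat m m" using len by auto
  have "similar_mat (V * diag_of_list t * transpose_mat V) (diag_of_list t)"
    unfolding similar_mat_def similar_mat_wit_def Let_def
    using Vc D orthogonal_mat_transpose_mult[OF V] orthogonal_mat_mult_transpose[OF V]
    by (intro exI[of _ V] exI[of _ "transpose_mat V"]) auto
  then have "char_poly (V * diag_of_list t * transpose_mat V) = char_poly (diag_of_list t)"
    by (rule char_poly_similar)
  also have "\<dots> = (\<Prod>a\<leftarrow>t. [:- a, 1:])"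
    using char_poly_upper_triangular[OF D] by (simp add: upper_triangular_def index_diag_of_list)
  finally show ?thesis .
qed

lemma order_prod_linear_factors:
  fixes as :: "real list"
  shows "order x (\<Prod>a\<leftarrow>as. [:- a, 1:]) = count (mset as) x"
proof (induction as)
  case Nil
  then show ?case by (simp add: order_0I)
next
  case (Cons a as)
  have "(\<Prod>a\<leftarrow>as. [:- a, 1:]) \<noteq> (0 :: real poly)"
    by (auto simp: prod_list_zero_iff)
  then have "[:- a, 1:] * (\<Prod>a\<leftarrow>as. [:- a, 1:]) \<noteq> 0"
    by (intro no_zero_divisors) simp_all
  from order_mult[OF this]
  have "order x (\<Prod>a\<leftarrow>a # as. [:- a, 1:]) = order x [:- a, 1:] + order x (\<Prod>a\<leftarrow>as. [:- a, 1:])"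
    by simp
  then show ?case using Cons.IH by (simp add: order_linear')
qed

lemma singular_value_list_unique:
  assumes s1: "singular_value_list m M s1" and s2: "singular_value_list m M s2"
  shows "s1 = s2"
proof -
  \<comment> \<open>Both lists square to the eigenvalues of \<open>M\<^sup>T M\<close>, counted with multiplicity.\<close>
  have char_poly: "char_poly (transpose_mat M * M) = (\<Prod>a\<leftarrow>map (\<lambda>x. x\<^sup>2) s. [:- a, 1:])"
    if s: "singular_value_list m M s" for s
  proof -
    obtain U V where "orthogonal_mat m U" "orthogonal_mat m V"
      and "M = U * diag_of_list s * transpose_mat V"
      using s unfolding singular_value_list_def by blast
    moreover have "length s = m" using s unfolding singular_value_list_def by blast
    ultimately show ?thesis
      by (simp add: transpose_mult_self_svd char_poly_orthogonal_similar_diag)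
  qed
  have "count (mset (map (\<lambda>x. x\<^sup>2) s1)) x = count (mset (map (\<lambda>x. x\<^sup>2) s2)) x" for x
    using char_poly[OF s1] char_poly[OF s2] by (metis order_prod_linear_factors)
  then have sq: "mset (map (\<lambda>x. x\<^sup>2) s1) = mset (map (\<lambda>x. x\<^sup>2) s2)" by (rule multiset_eqI)
  have sqrt_sq: "mset s = image_mset sqrt (mset (map (\<lambda>x. x\<^sup>2) s))"
    if "singular_value_list m M s" for s
  proof -
    have "\<forall>x\<in>set s. 0 \<le> x" using that unfolding singular_value_list_def by blast
    then have "map sqrt (map (\<lambda>x. x\<^sup>2) s) = s" by (induction s) auto
    then show ?thesis by (metis mset_map)
  qed
  have "mset s1 = mset s2"
    using sqrt_sq[OF s1] sqrt_sq[OF s2] sq by simp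
  moreover have "sorted s1" "sorted s2"
    using s1 s2 unfolding singular_value_list_def by blast+
  ultimately show ?thesis
    by (metis properties_for_sort sorted_sort_id)
qed

lemma singular_values:
  assumes "M \<in> carrier_mat m m"
  shows "singular_value_list m M (singular_values M)"
proof -
  have "\<exists>!s. singular_value_list m M s"
    using singular_value_list_exists[OF assms] singular_value_list_unique by blast
  then show ?thesis
    using assms theI'[of "singular_value_list m M"]
    unfolding singular_values_def singular_value_list_def by simp
qed

section \<open>Convexity of the sum of all but the smallest singular value\<close>

lemma sum_mult_le_sum_tail:
  fixes s c :: "nat \<Rightarrow> real"
  assumes m: "0 < m" and s_min: "\<And>k. k < m \<Longrightarrow> s 0 \<le> s k" and s0: "0 \<le> s 0"
    and c_le: "\<And>k. k < m \<Longrightarrow> c k \<le> 1" and c_sum: "(\<Sum>k<m. c k) \<le> real (m - 1)"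
  shows "(\<Sum>k<m. s k * c k) \<le> (\<Sum>k\<in>{1..<m}. s k)"
proof -
  have split: "(\<Sum>k<m. f k) = f 0 + (\<Sum>k\<in>{1..<m}. f k)" for f :: "nat \<Rightarrow> real"
    using m by (simp add: atLeast1_lessThan_eq_remove0 sum.remove)
  have "(\<Sum>k\<in>{1..<m}. s k * (c k - 1)) \<le> (\<Sum>k\<in>{1..<m}. s 0 * (c k - 1))"
    using s_min c_le by (intro sum_mono mult_right_mono_neg) auto
  also have "\<dots> = s 0 * (\<Sum>k\<in>{1..<m}. c k) - s 0 * real (m - 1)"
    by (simp add: right_diff_distrib sum_subtractf flip: sum_distrib_left)
  also have "\<dots> = s 0 * ((\<Sum>k<m. c k) - real (m - 1)) - s 0 * c 0"
    using split[of c] by (simp add: algebra_simps)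
  also have "\<dots> \<le> - s 0 * c 0"
    using s0 c_sum by (simp add: mult_nonneg_nonpos)
  finally show ?thesis
    using split[of "\<lambda>k. s k * c k"] by (simp add: sum_subtractf algebra_simps)
qed

lemma orthogonal_mats_col_products_le:
  assumes a: "orthogonal_mat m a" and b: "orthogonal_mat m b" and k: "k < m" and I: "I \<subseteq> {..<m}"
  shows "(\<Sum>i\<in>I. a $$ (i, k) * b $$ (i, k)) \<le> 1"
proof -
  have amgm: "x * y \<le> (x\<^sup>2 + y\<^sup>2) / 2" for x y :: real
    using sum_squares_bound[of x y] by simp
  have "(\<Sum>i\<in>I. a $$ (i, k) * b $$ (i, k)) \<le> (\<Sum>i<m. ((a $$ (i, k))\<^sup>2 + (b $$ (i, k))\<^sup>2) / 2)"
    using I by (intro order_trans[OF sum_mono[OF amgm] sum_mono2]) auto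
  also have "\<dots> = 1"
    using orthogonal_mat_col_sum_squares[OF a k] orthogonal_mat_col_sum_squares[OF b k]
    by (simp add: sum.distrib flip: sum_divide_distrib)
  finally show ?thesis .
qed

lemma orthogonal_mats_row_products_le:
  assumes a: "orthogonal_mat m a" and b: "orthogonal_mat m b" and I: "I \<subseteq> {..<m}"
  shows "(\<Sum>i\<in>I. \<Sum>k<m. a $$ (i, k) * b $$ (i, k)) \<le> real (card I)"
proof -
  have amgm: "x * y \<le> (x\<^sup>2 + y\<^sup>2) / 2" for x y :: real
    using sum_squares_bound[of x y] by simp
  have "(\<Sum>i\<in>I. \<Sum>k<m. a $$ (i, k) * b $$ (i, k)) \<le> (\<Sum>i\<in>I. \<Sum>k<m. ((a $$ (i, k))\<^sup>2 + (b $$ (i, k))\<^sup>2) / 2)"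
    by (intro sum_mono amgm)
  also have "\<dots> = (\<Sum>i\<in>I. 1)"
    using I orthogonal_mat_row_sum_squares[OF a] orthogonal_mat_row_sum_squares[OF b]
    by (intro sum.cong) (auto simp: sum.distrib simp flip: sum_divide_distrib)
  finally show ?thesis by simp
qed

lemma sum_tail_diag_le_sum_tail_singular_values:
  fixes M :: "real mat"
  assumes M: "M \<in> carrier_mat m m" and P: "orthogonal_mat m P" and Q: "orthogonal_mat m Q"
  shows "(\<Sum>i\<in>{1..<m}. (transpose_mat P * M * Q) $$ (i, i)) \<le> (\<Sum>i\<in>{1..<m}. singular_values M ! i)"
proof (cases "m = 0")
  case False
  define s where "s = singular_values M"
  obtain U V where U: "orthogonal_mat m U" and V: "orthogonal_mat m V" and svd: "M = U * diag_of_list s * transpose_mat V"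
    and len: "length s = m" and sorted: "sorted s" and nonneg: "\<forall>x\<in>set s. 0 \<le> x"
    using singular_values[OF M] unfolding s_def singular_value_list_def by blast
  define a where "a = transpose_mat P * U"
  define b where "b = transpose_mat Q * V"
  have a: "orthogonal_mat m a" and b: "orthogonal_mat m b"
    unfolding a_def b_def using P Q U V by (simp_all add: orthogonal_mat_mult orthogonal_mat_transpose)
  have ac: "a \<in> carrier_mat m m" and bc: "b \<in> carrier_mat m m"
    using a b by (simp_all add: orthogonal_mat_carrier)
  have "P \<in> carrier_mat m m" "Q \<in> carrier_mat m m" "U \<in> carrier_mat m m" "V \<in> carrier_mat m m"
    using P Q U V by (simp_all add: orthogonal_mat_carrier)
  moreover have "diag_of_list s \<in> carrier_mat m m" using len by auto
  ultimately have "transpose_mat P * M * Q = a * diag_of_list s * transpose_mat b"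
    unfolding svd a_def b_def
    by (simp add: transpose_mult[of _ m m _ m] assoc_mult_mat[of _ m m _ m _ m])
  then have diag: "(transpose_mat P * M * Q) $$ (i, i) = (\<Sum>k<m. s ! k * (a $$ (i, k) * b $$ (i, k)))"
    if "i < m" for i
    using index_mult_diag_of_list_transpose[OF ac bc len that that] by (simp add: ac_simps)
  define c where "c k = (\<Sum>i\<in>{1..<m}. a $$ (i, k) * b $$ (i, k))" for k
  have "(\<Sum>i\<in>{1..<m}. (transpose_mat P * M * Q) $$ (i, i))
      = (\<Sum>i\<in>{1..<m}. \<Sum>k<m. s ! k * (a $$ (i, k) * b $$ (i, k)))"
    by (intro sum.cong) (simp_all add: diag)
  also have "\<dots> = (\<Sum>k<m. s ! k * c k)"
    unfolding c_def sum_distrib_left by (rule sum.swap)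
  also have "\<dots> \<le> (\<Sum>k\<in>{1..<m}. s ! k)"
  proof (rule sum_mult_le_sum_tail)
    show "s ! 0 \<le> s ! k" if "k < m" for k using sorted len that by (simp add: sorted_nth_mono)
    show "c k \<le> 1" if "k < m" for k
      unfolding c_def using orthogonal_mats_col_products_le[OF a b that, of "{1..<m}"] by force
    show "(\<Sum>k<m. c k) \<le> real (m - 1)"
      unfolding c_def using orthogonal_mats_row_products_le[OF a b, of "{1..<m}"] by (subst sum.swap) force
  qed (use False nonneg len in auto)
  finally show ?thesis unfolding s_def .
qed simp

lemma singular_values_diagonalize:
  fixes M :: "real mat"
  assumes M: "M \<in> carrier_mat m m"
  obtains W Z where "orthogonal_mat m W" "orthogonal_mat m Z"
    "transpose_mat W * M * Z = diag_of_list (singular_values M)"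
proof -
  obtain W Z where "orthogonal_mat m W" "orthogonal_mat m Z"
    "M = W * diag_of_list (singular_values M) * transpose_mat Z" "length (singular_values M) = m"
    using singular_values[OF M] unfolding singular_value_list_def by blast
  then show ?thesis
    using that orthogonal_sandwich_eq_iff[OF _ _ M] by force
qed

lemma sum_tail_singular_values_convex:
  fixes X Y :: "real mat"
  assumes X: "X \<in> carrier_mat m m" and Y: "Y \<in> carrier_mat m m" and t: "0 \<le> t" "t \<le> 1"
  shows "(\<Sum>i\<in>{1..<m}. singular_values (t \<cdot>\<^sub>m X + (1 - t) \<cdot>\<^sub>m Y) ! i)
    \<le> t * (\<Sum>i\<in>{1..<m}. singular_values X ! i) + (1 - t) * (\<Sum>i\<in>{1..<m}. singular_values Y ! i)"
proof -
  let ?M = "t \<cdot>\<^sub>m X + (1 - t) \<cdot>\<^sub>m Y"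
  have M: "?M \<in> carrier_mat m m" using X Y by simp
  obtain W Z where W: "orthogonal_mat m W" and Z: "orthogonal_mat m Z"
    and diag: "transpose_mat W * ?M * Z = diag_of_list (singular_values ?M)"
    by (rule singular_values_diagonalize[OF M])
  have Wt: "transpose_mat W \<in> carrier_mat m m" and Zc: "Z \<in> carrier_mat m m"
    using W Z by (simp_all add: orthogonal_mat_carrier)
  have len: "length (singular_values ?M) = m"
    using singular_values[OF M] by (simp add: singular_value_list_def)
  have "transpose_mat W * ?M * Z = t \<cdot>\<^sub>m (transpose_mat W * X * Z) + (1 - t) \<cdot>\<^sub>m (transpose_mat W * Y * Z)"
    using Wt Zc X Y by (simp add: mult_convex_comb_left[where a = m and b = m and c = m]
        mult_convex_comb_right[where a = m and b = m and c = m])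
  then have "singular_values ?M ! i = t * (transpose_mat W * X * Z) $$ (i, i) + (1 - t) * (transpose_mat W * Y * Z) $$ (i, i)"
    if "i < m" for i
    using arg_cong[OF diag, of "\<lambda>A. A $$ (i, i)"] that len Wt Zc X Y by (simp add: index_diag_of_list)
  then have "(\<Sum>i\<in>{1..<m}. singular_values ?M ! i)
      = t * (\<Sum>i\<in>{1..<m}. (transpose_mat W * X * Z) $$ (i, i)) + (1 - t) * (\<Sum>i\<in>{1..<m}. (transpose_mat W * Y * Z) $$ (i, i))"
    by (simp add: sum.distrib sum_distrib_left)
  also have "\<dots> \<le> t * (\<Sum>i\<in>{1..<m}. singular_values X ! i) + (1 - t) * (\<Sum>i\<in>{1..<m}. singular_values Y ! i)"
    using t sum_tail_diag_le_sum_tail_singular_values[OF X W Z] sum_tail_diag_le_sum_tail_singular_values[OF Y W Z]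
    by (intro add_mono mult_left_mono) auto
  finally show ?thesis .
qed

section \<open>Block lower-triangular Toeplitz matrices\<close>

lemma block_mat_carrier [simp]: "block_mat n N P f \<in> carrier_mat (n * N) (n * N)"
  and dim_block_mat [simp]: "dim_row (block_mat n N P f) = n * N" "dim_col (block_mat n N P f) = n * N"
  by (simp_all add: block_mat_def)

lemma index_block_mat:
  "r < n * N \<Longrightarrow> c < n * N \<Longrightarrow> block_mat n N P f $$ (r, c) =
     (if P (r div n) (c div n) then f (r div n) (c div n) $$ (r mod n, c mod n) else 0)"
  by (simp add: block_mat_def)

lemma block_index_bounds: "r < n * N \<Longrightarrow> r div n < N \<and> r mod n < (n::nat)"
  by (metis div_less_iff_less_mult mod_less_divisor mult.commute nat_0_less_mult_iff zero_less_iff_neq_zero gr_implies_not0)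

lemma eq_iff_block_index: "(r::nat) = c \<longleftrightarrow> r div n = c div n \<and> r mod n = c mod n"
  by (metis div_mult_mod_eq)

lemma sum_lessThan_mult_blocks:
  "(\<Sum>r<n * (N::nat). g r) = (\<Sum>l<N. \<Sum>b<n. (g (l * n + b) :: 'a :: comm_monoid_add))"
proof (induction N)
  case (Suc N)
  have "(\<Sum>r<a + k. g r) = (\<Sum>r<a. g r) + (\<Sum>b<k. g (a + b))" for a k
    by (induction k) (simp_all add: ac_simps)
  from this[of "n * N" n] show ?case using Suc.IH by (simp add: algebra_simps)
qed simp

lemma index_block_mat_mult:
  assumes f: "\<And>k l. f k l \<in> carrier_mat n n" and g: "\<And>k l. g k l \<in> carrier_mat n n"
    and r: "r < n * N" and c: "c < n * N"
  shows "(block_mat n N P f * block_mat n N Q g) $$ (r, c) =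
    (\<Sum>l<N. if P (r div n) l \<and> Q l (c div n) then (f (r div n) l * g l (c div n)) $$ (r mod n, c mod n) else 0)"
proof -
  have rm: "r mod n < n" and cm: "c mod n < n" using block_index_bounds r c by blast+
  have lt: "l * n + b < n * N" if "l < N" "b < n" for l b
  proof -
    have "l * n + b < Suc l * n" using that by simp
    also have "\<dots> \<le> N * n" using that by (intro mult_right_mono) auto
    finally show ?thesis by (simp add: mult.commute)
  qed
  have "(block_mat n N P f * block_mat n N Q g) $$ (r, c)
      = (\<Sum>l<N. \<Sum>b<n. block_mat n N P f $$ (r, l * n + b) * block_mat n N Q g $$ (l * n + b, c))"
    unfolding index_mult_mat_sum[OF block_mat_carrier block_mat_carrier r c] by (rule sum_lessThan_mult_blocks)
  also have "\<dots> = (\<Sum>l<N. if P (r div n) l \<and> Q l (c div n) then (f (r div n) l * g l (c div n)) $$ (r mod n, c mod n) else 0)"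
    using r c lt index_mult_mat_sum[OF f g rm cm] by (intro sum.cong) (auto simp: index_block_mat)
  finally show ?thesis .
qed

text \<open>With \<open>S\<close> the block down-shift, \<open>toeplitz_pow n N A = (I - S \<otimes> A)\<^sup>-\<^sup>1\<close> and
  \<open>toeplitz_bidiag n N A = I - S \<otimes> A\<close>.\<close>

definition toeplitz_pow :: "nat \<Rightarrow> nat \<Rightarrow> real mat \<Rightarrow> real mat" where
  "toeplitz_pow n N A = block_mat n N (\<lambda>k l. l \<le> k) (\<lambda>k l. A ^\<^sub>m (k - l))"

definition toeplitz_bidiag :: "nat \<Rightarrow> nat \<Rightarrow> real mat \<Rightarrow> real mat" where
  "toeplitz_bidiag n N A = block_mat n N (\<lambda>k l. k = l \<or> k = Suc l) (\<lambda>k l. if k = l then 1\<^sub>m n else - A)"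

lemma block_mats_carrier [simp]:
  "toeplitz_pow n N A \<in> carrier_mat (n * N) (n * N)"
  "toeplitz_bidiag n N A \<in> carrier_mat (n * N) (n * N)"
  "F_a n N A D \<in> carrier_mat (n * N) (n * N)"
  "F_ex n N A D \<in> carrier_mat (n * N) (n * N)"
  "kron_id n N A \<in> carrier_mat (n * N) (n * N)"
  by (simp_all add: toeplitz_pow_def toeplitz_bidiag_def F_a_def F_ex_def kron_id_def)

lemma dim_block_mats [simp]:
  "dim_row (toeplitz_pow n N A) = n * N" "dim_col (toeplitz_pow n N A) = n * N"
  "dim_row (toeplitz_bidiag n N A) = n * N" "dim_col (toeplitz_bidiag n N A) = n * N"
  "dim_row (F_a n N A D) = n * N" "dim_col (F_a n N A D) = n * N"
  "dim_row (F_ex n N A D) = n * N" "dim_col (F_ex n N A D) = n * N"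
  "dim_row (kron_id n N A) = n * N" "dim_col (kron_id n N A) = n * N"
  by (simp_all add: toeplitz_pow_def toeplitz_bidiag_def F_a_def F_ex_def kron_id_def)

lemma kron_id_mult:
  assumes M: "M \<in> carrier_mat n n" and M': "M' \<in> carrier_mat n n"
  shows "kron_id n N M * kron_id n N M' = kron_id n N (M * M')"
proof (rule eq_matI)
  fix r c assume "r < dim_row (kron_id n N (M * M'))" "c < dim_col (kron_id n N (M * M'))"
  then have r: "r < n * N" and c: "c < n * N" by (simp_all add: kron_id_def)
  have "(kron_id n N M * kron_id n N M') $$ (r, c) =
      (\<Sum>l<N. if l = c div n then (if r div n = c div n then (M * M') $$ (r mod n, c mod n) else 0) else 0)"
    unfolding kron_id_def index_block_mat_mult[OF _ _ r c, of "\<lambda>_ _. M" "\<lambda>_ _. M'", OF M M']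
    by (intro sum.cong) auto
  then show "(kron_id n N M * kron_id n N M') $$ (r, c) = kron_id n N (M * M') $$ (r, c)"
    using block_index_bounds[OF c] r c by (simp add: kron_id_def index_block_mat)
qed (auto simp: kron_id_def)

lemma kron_id_one: "kron_id n N (1\<^sub>m n) = 1\<^sub>m (n * N)"
proof (rule eq_matI)
  fix r c assume "r < dim_row (1\<^sub>m (n * N))" "c < dim_col (1\<^sub>m (n * N))"
  then have r: "r < n * N" and c: "c < n * N" by simp_all
  then show "kron_id n N (1\<^sub>m n) $$ (r, c) = 1\<^sub>m (n * N) $$ (r, c)"
    using block_index_bounds[OF r] block_index_bounds[OF c] eq_iff_block_index[of r c n]
    by (auto simp: kron_id_def index_block_mat)
qed (auto simp: kron_id_def)

lemma kron_id_inverse: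
  assumes "M \<in> carrier_mat n n" "M' \<in> carrier_mat n n" "M * M' = 1\<^sub>m n"
  shows "kron_id n N M * kron_id n N M' = 1\<^sub>m (n * N)"
  using assms by (simp add: kron_id_mult kron_id_one)

lemma F_a_eq_toeplitz_pow:
  assumes A: "A \<in> carrier_mat n n" and B: "B \<in> carrier_mat n n"
  shows "F_a n N A B = toeplitz_pow n N A * kron_id n N B"
proof (rule eq_matI)
  fix r c assume "r < dim_row (toeplitz_pow n N A * kron_id n N B)" "c < dim_col (toeplitz_pow n N A * kron_id n N B)"
  then have r: "r < n * N" and c: "c < n * N" by simp_all
  have "(toeplitz_pow n N A * kron_id n N B) $$ (r, c)
      = (\<Sum>l<N. if l \<le> r div n \<and> l = c div n then (A ^\<^sub>m (r div n - l) * B) $$ (r mod n, c mod n) else 0)"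
    unfolding toeplitz_pow_def kron_id_def by (rule index_block_mat_mult[OF _ _ r c]) (use A B in auto)
  also have "\<dots> = (\<Sum>l<N. if l = c div n then
      (if c div n \<le> r div n then (A ^\<^sub>m (r div n - c div n) * B) $$ (r mod n, c mod n) else 0) else 0)"
    by (intro sum.cong) auto
  finally show "F_a n N A B $$ (r, c) = (toeplitz_pow n N A * kron_id n N B) $$ (r, c)"
    using block_index_bounds[OF c] r c by (simp add: F_a_def index_block_mat)
qed simp_all

lemma toeplitz_pow_mult_bidiag:
  assumes A: "A \<in> carrier_mat n n"
  shows "toeplitz_pow n N A * toeplitz_bidiag n N A = 1\<^sub>m (n * N)"
proof (rule eq_matI)
  fix r c assume "r < dim_row (1\<^sub>m (n * N))" "c < dim_col (1\<^sub>m (n * N))"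
  then have r: "r < n * N" and c: "c < n * N" by simp_all
  define k where "k = r div n"
  define l where "l = c div n"
  have kN: "k < N" and an: "r mod n < n" using block_index_bounds[OF r] unfolding k_def by auto
  have lN: "l < N" and dn: "c mod n < n" using block_index_bounds[OF c] unfolding l_def by auto
  let ?e = "\<lambda>X. X $$ (r mod n, c mod n)"
  define X where "X = (if l \<le> k then ?e (A ^\<^sub>m (k - l)) else 0)"
  define Y where "Y = (if Suc l \<le> k then ?e (A ^\<^sub>m (k - Suc l) * - A) else 0)"
  have "(toeplitz_pow n N A * toeplitz_bidiag n N A) $$ (r, c) =
     (\<Sum>j<N. if j \<le> k \<and> (j = l \<or> j = Suc l) then ?e (A ^\<^sub>m (k - j) * (if j = l then 1\<^sub>m n else - A)) else 0)"
    unfolding toeplitz_pow_def toeplitz_bidiag_def k_def l_def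
    by (rule index_block_mat_mult[OF _ _ r c]) (use A in auto)
  also have "\<dots> = (\<Sum>j<N. (if j = l then X else 0) + (if j = Suc l then Y else 0))"
    using A an dn by (intro sum.cong) (auto simp: X_def Y_def)
  also have "\<dots> = X + Y"
    using lN kN by (auto simp: sum.distrib Y_def)
  \<comment> \<open>The two nonzero terms telescope: \<open>A\<^sup>k\<^sup>-\<^sup>l - A\<^sup>k\<^sup>-\<^sup>l\<^sup>-\<^sup>1 A = 0\<close> below the diagonal.\<close>
  also have "\<dots> = (if k = l \<and> r mod n = c mod n then 1 else 0)"
  proof (cases "Suc l \<le> k")
    case True
    then have "A ^\<^sub>m (k - l) = A ^\<^sub>m (k - Suc l) * A"
      by (metis Suc_diff_Suc Suc_le_lessD pow_mat.simps(2))
    moreover have "?e (A ^\<^sub>m (k - Suc l) * - A) = - ?e (A ^\<^sub>m (k - Suc l) * A)"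
      using A an dn by (simp add: mult_carrier_mat[of _ n n] index_mult_mat_sum[of _ n n] sum_negf[symmetric])
    ultimately show ?thesis using True by (simp add: X_def Y_def)
  next
    case False
    then show ?thesis using A an dn by (cases "l \<le> k") (auto simp: X_def Y_def)
  qed
  also have "\<dots> = 1\<^sub>m (n * N) $$ (r, c)"
    using r c eq_iff_block_index[of r c n] unfolding k_def l_def by simp
  finally show "(toeplitz_pow n N A * toeplitz_bidiag n N A) $$ (r, c) = 1\<^sub>m (n * N) $$ (r, c)" .
qed simp_all

lemma toeplitz_pow_upper_zero:
  assumes A: "A \<in> carrier_mat n n" and rc: "r < c" and c: "c < n * N"
  shows "toeplitz_pow n N A $$ (r, c) = 0"
proof -
  have r: "r < n * N" using rc c by simp
  have "r div n \<le> c div n" using rc by (simp add: div_le_mono)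
  moreover have "r div n = c div n \<Longrightarrow> r mod n \<noteq> c mod n"
    using rc eq_iff_block_index[of r c n] by auto
  ultimately show ?thesis
    using A r c block_index_bounds[OF r] block_index_bounds[OF c]
    by (auto simp: toeplitz_pow_def index_block_mat)
qed

lemma toeplitz_pow_diag:
  assumes A: "A \<in> carrier_mat n n" and r: "r < n * N"
  shows "toeplitz_pow n N A $$ (r, r) = 1"
  using A r block_index_bounds[OF r] by (simp add: toeplitz_pow_def index_block_mat)

lemma F_ex_mult_toeplitz_pow_upper_zero:
  assumes "Ae \<in> carrier_mat n n" "DA \<in> carrier_mat n n" "Ax \<in> carrier_mat n n"
    and r: "r < n * N" and c: "c < n * N" and le: "r div n \<le> c div n"
  shows "(F_ex n N Ae DA * toeplitz_pow n N Ax) $$ (r, c) = 0"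
proof -
  have "(F_ex n N Ae DA * toeplitz_pow n N Ax) $$ (r, c) = (\<Sum>l<N. if l < r div n \<and> c div n \<le> l then
      (Ae ^\<^sub>m (r div n - l - 1) * DA * Ax ^\<^sub>m (l - c div n)) $$ (r mod n, c mod n) else 0)"
    unfolding F_ex_def toeplitz_pow_def by (rule index_block_mat_mult[OF _ _ r c]) (use assms in auto)
  also have "\<dots> = 0" using le by (intro sum.neutral) auto
  finally show ?thesis .
qed

lemma det_toeplitz_pow_add_F_ex_mult:
  assumes Ae: "Ae \<in> carrier_mat n n" and DA: "DA \<in> carrier_mat n n" and Ax: "Ax \<in> carrier_mat n n"
  shows "det (toeplitz_pow n N Ae + F_ex n N Ae DA * toeplitz_pow n N Ax) = 1"
proof -
  let ?G = "toeplitz_pow n N Ae + F_ex n N Ae DA * toeplitz_pow n N Ax"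
  have G: "?G \<in> carrier_mat (n * N) (n * N)" by simp
  have upper: "?G $$ (i, j) = 0" if "i < j" "j < n * N" for i j
    using that toeplitz_pow_upper_zero[OF Ae that] F_ex_mult_toeplitz_pow_upper_zero[OF Ae DA Ax, of i N j]
    by (simp add: div_le_mono)
  have "diag_mat ?G = replicate (n * N) 1"
    using toeplitz_pow_diag[OF Ae] F_ex_mult_toeplitz_pow_upper_zero[OF Ae DA Ax]
    by (intro nth_equalityI) (auto simp: diag_mat_def)
  then show ?thesis using det_lower_triangular[OF upper G] by simp
qed

section \<open>The inverse of \<open>\<kappa>\<close> is affine in the gain\<close>

lemma minv_eq_right_inverse:
  fixes M N :: "real mat"
  assumes M: "M \<in> carrier_mat m m" and N: "N \<in> carrier_mat m m" and MN: "M * N = 1\<^sub>m m"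
  shows "minv M = N"
proof -
  have NM: "N * M = 1\<^sub>m m" by (rule mat_mult_left_right_inverse[OF M N MN])
  have "minv M \<in> carrier_mat m m \<and> M * minv M = 1\<^sub>m m \<and> minv M * M = 1\<^sub>m m"
    unfolding minv_def using M N MN NM someI[of "\<lambda>X. X \<in> carrier_mat m m \<and> M * X = 1\<^sub>m m \<and> X * M = 1\<^sub>m m" N]
    by simp
  then have X: "minv M \<in> carrier_mat m m" and XM: "minv M * M = 1\<^sub>m m" by simp_all
  have "minv M = minv M * (M * N)" using X MN by simp
  also have "\<dots> = (minv M * M) * N" using assoc_mult_mat[OF X M N] by simp
  also have "\<dots> = N" using XM N by simp
  finally show ?thesis .
qed

lemma right_inverse_of_det_nonzero:
  fixes M :: "real mat"
  assumes M: "M \<in> carrier_mat m m" and "det M \<noteq> 0"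
  obtains N where "N \<in> carrier_mat m m" "M * N = 1\<^sub>m m"
proof -
  have "M \<in> Units (ring_mat TYPE(real) m ())" by (rule det_non_zero_imp_unit[OF assms])
  then show ?thesis using that unfolding Units_def ring_mat_def by auto
qed

lemma det_nonzero_of_right_inverse:
  fixes M :: "real mat"
  assumes "M \<in> carrier_mat m m" "N \<in> carrier_mat m m" "M * N = 1\<^sub>m m"
  shows "det M \<noteq> 0"
  using assms det_mult[OF assms(1,2)] by auto

definition kappa_inv :: "nat \<Rightarrow> nat \<Rightarrow> real mat \<Rightarrow> real mat \<Rightarrow> real mat \<Rightarrow> real mat \<Rightarrow> real mat \<Rightarrow> real mat
    \<Rightarrow> real mat \<Rightarrow> real mat" where
  "kappa_inv n N A B C CJi L DA K = kron_id n N C *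
     (toeplitz_pow n N (A - L * C) * toeplitz_bidiag n N (A + B * K * C) + F_ex n N (A - L * C) DA) * kron_id n N CJi"

lemma kappa_inv_carrier: "kappa_inv n N A B C CJi L DA K \<in> carrier_mat (n * N) (n * N)"
  by (simp add: kappa_inv_def)

lemma minv_mult_minv:
  fixes M N Mi :: "real mat"
  assumes M: "M \<in> carrier_mat m m" and N: "N \<in> carrier_mat m m" and Mi: "Mi \<in> carrier_mat m m"
    and M_Mi: "M * Mi = 1\<^sub>m m" and det: "det N \<noteq> 0"
  shows "minv (M * minv N) = N * Mi"
proof -
  obtain Ni where Ni: "Ni \<in> carrier_mat m m" and N_Ni: "N * Ni = 1\<^sub>m m"
    by (rule right_inverse_of_det_nonzero[OF N det])
  have minv: "minv N = Ni" by (rule minv_eq_right_inverse[OF N Ni N_Ni])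
  have "M * Ni * (N * Mi) = M * (Ni * N) * Mi"
    using M N Ni Mi by (simp add: assoc_mult_mat[of _ m m _ m _ m])
  also have "\<dots> = 1\<^sub>m m"
    using mat_mult_left_right_inverse[OF N Ni N_Ni] M M_Mi by simp
  finally show ?thesis
    unfolding minv using M N Ni Mi by (intro minv_eq_right_inverse[of _ m]) simp_all
qed

lemma F_p_eq:
  assumes "A \<in> carrier_mat n n" "B \<in> carrier_mat n n" "C \<in> carrier_mat n n" "K \<in> carrier_mat n n"
  shows "F_p n N A B C CJ K = kron_id n N CJ * toeplitz_pow n N (A + B * K * C) * kron_id n N B"
  using assms unfolding F_p_def
  by (simp add: F_a_eq_toeplitz_pow assoc_mult_mat[of _ "n * N" "n * N" _ "n * N" _ "n * N"])

lemma F_r_eq: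
  assumes "A \<in> carrier_mat n n" "B \<in> carrier_mat n n" "C \<in> carrier_mat n n" "K \<in> carrier_mat n n"
    "L \<in> carrier_mat n n"
  shows "F_r n N A B C L DA K = kron_id n N C *
    (toeplitz_pow n N (A - L * C) + F_ex n N (A - L * C) DA * toeplitz_pow n N (A + B * K * C)) * kron_id n N B"
  using assms unfolding F_r_def
  by (simp add: F_a_eq_toeplitz_pow minus_carrier_mat assoc_mult_mat[of _ "n * N" "n * N" _ "n * N" _ "n * N"]
      add_mult_distrib_mat[of _ "n * N" "n * N" _ _ "n * N"])

lemma det_F_r_nonzero:
  assumes A: "A \<in> carrier_mat n n" and B: "B \<in> carrier_mat n n" and C: "C \<in> carrier_mat n n"
    and K: "K \<in> carrier_mat n n" and L: "L \<in> carrier_mat n n" and DA: "DA \<in> carrier_mat n n"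
    and Bi: "Bi \<in> carrier_mat n n" "B * Bi = 1\<^sub>m n" and Ci: "Ci \<in> carrier_mat n n" "C * Ci = 1\<^sub>m n"
  shows "det (F_r n N A B C L DA K) \<noteq> 0"
proof -
  let ?G = "toeplitz_pow n N (A - L * C) + F_ex n N (A - L * C) DA * toeplitz_pow n N (A + B * K * C)"
  have G: "?G \<in> carrier_mat (n * N) (n * N)" by simp
  have "det ?G = 1"
    using A B C K L DA by (intro det_toeplitz_pow_add_F_ex_mult) auto
  moreover have "det (kron_id n N C) \<noteq> 0" "det (kron_id n N B) \<noteq> 0"
    using det_nonzero_of_right_inverse kron_id_inverse[OF C Ci(1,2)] kron_id_inverse[OF B Bi(1,2)]
    by (metis block_mats_carrier(5))+
  ultimately show ?thesis
    unfolding F_r_eq[OF A B C K L] using G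
    by (simp add: det_mult[of _ "n * N"])
qed

lemma minv_kappa:
  fixes A B C CJ L DA K Bi Ci CJi :: "real mat"
  assumes A: "A \<in> carrier_mat n n" and B: "B \<in> carrier_mat n n" and C: "C \<in> carrier_mat n n"
    and CJ: "CJ \<in> carrier_mat n n" and L: "L \<in> carrier_mat n n" and DA: "DA \<in> carrier_mat n n"
    and K: "K \<in> carrier_mat n n"
    and Bi: "Bi \<in> carrier_mat n n" "B * Bi = 1\<^sub>m n" and Ci: "Ci \<in> carrier_mat n n" "C * Ci = 1\<^sub>m n"
    and CJi: "CJi \<in> carrier_mat n n" "CJ * CJi = 1\<^sub>m n"
  shows "minv (F_p n N A B C CJ K * minv (F_r n N A B C L DA K)) = kappa_inv n N A B C CJi L DA K"
proof -
  define Ax where "Ax = A + B * K * C"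
  have Ax: "Ax \<in> carrier_mat n n" unfolding Ax_def using A B K C by auto
  have T: "toeplitz_pow n N Ax * toeplitz_bidiag n N Ax = 1\<^sub>m (n * N)"
    by (rule toeplitz_pow_mult_bidiag[OF Ax])
  note kron = kron_id_inverse[OF B Bi, of N] kron_id_inverse[OF CJ CJi, of N]
  note assoc = assoc_mult_mat[of _ "n * N" "n * N" _ "n * N" _ "n * N"]
  note one = left_mult_one_mat[of _ "n * N" "n * N"] right_mult_one_mat[of _ "n * N" "n * N"]
  define Fpi where "Fpi = kron_id n N Bi * toeplitz_bidiag n N Ax * kron_id n N CJi"
  have "F_p n N A B C CJ K * Fpi = kron_id n N CJ *
      (toeplitz_pow n N Ax * (kron_id n N B * kron_id n N Bi) * toeplitz_bidiag n N Ax) * kron_id n N CJi"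
    unfolding F_p_eq[OF A B C K] Fpi_def Ax_def by (simp add: assoc)
  then have Fp_Fpi: "F_p n N A B C CJ K * Fpi = 1\<^sub>m (n * N)"
    by (simp add: kron T one)
  have "F_r n N A B C L DA K * Fpi = kron_id n N C * ((toeplitz_pow n N (A - L * C) + F_ex n N (A - L * C) DA *
      toeplitz_pow n N Ax) * (kron_id n N B * kron_id n N Bi) * toeplitz_bidiag n N Ax) * kron_id n N CJi"
    unfolding F_r_eq[OF A B C K L] Fpi_def Ax_def by (simp add: assoc)
  also have "\<dots> = kappa_inv n N A B C CJi L DA K"
    unfolding kappa_inv_def Ax_def[symmetric]
    by (simp add: kron add_mult_distrib_mat[of _ "n * N" "n * N" _ _ "n * N"] assoc T one)
  finally show ?thesis
    using minv_mult_minv[OF _ _ _ Fp_Fpi det_F_r_nonzero[OF A B C K L DA Bi Ci]]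
    by (simp add: F_p_eq[OF A B C K] F_r_eq[OF A B C K L] Fpi_def)
qed

lemma toeplitz_bidiag_convex_comb:
  assumes X: "X \<in> carrier_mat n n" and Y: "Y \<in> carrier_mat n n"
  shows "toeplitz_bidiag n N (t \<cdot>\<^sub>m X + (1 - t) \<cdot>\<^sub>m Y) = t \<cdot>\<^sub>m toeplitz_bidiag n N X + (1 - t) \<cdot>\<^sub>m toeplitz_bidiag n N Y"
proof (rule eq_matI)
  fix r c assume "r < dim_row (t \<cdot>\<^sub>m toeplitz_bidiag n N X + (1 - t) \<cdot>\<^sub>m toeplitz_bidiag n N Y)"
    "c < dim_col (t \<cdot>\<^sub>m toeplitz_bidiag n N X + (1 - t) \<cdot>\<^sub>m toeplitz_bidiag n N Y)"
  then have r: "r < n * N" and c: "c < n * N" by simp_all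
  show "toeplitz_bidiag n N (t \<cdot>\<^sub>m X + (1 - t) \<cdot>\<^sub>m Y) $$ (r, c)
      = (t \<cdot>\<^sub>m toeplitz_bidiag n N X + (1 - t) \<cdot>\<^sub>m toeplitz_bidiag n N Y) $$ (r, c)"
    using r c block_index_bounds[OF r] block_index_bounds[OF c] X Y
    by (auto simp: toeplitz_bidiag_def index_block_mat algebra_simps)
qed simp_all

lemma kappa_inv_convex_comb:
  assumes A: "A \<in> carrier_mat n n" and B: "B \<in> carrier_mat n n" and C: "C \<in> carrier_mat n n"
    and L: "L \<in> carrier_mat n n" and DA: "DA \<in> carrier_mat n n" and CJi: "CJi \<in> carrier_mat n n"
    and X: "X \<in> carrier_mat n n" and Y: "Y \<in> carrier_mat n n"
  shows "kappa_inv n N A B C CJi L DA (t \<cdot>\<^sub>m X + (1 - t) \<cdot>\<^sub>m Y)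
    = t \<cdot>\<^sub>m kappa_inv n N A B C CJi L DA X + (1 - t) \<cdot>\<^sub>m kappa_inv n N A B C CJi L DA Y"
proof -
  have "A + B * (t \<cdot>\<^sub>m X + (1 - t) \<cdot>\<^sub>m Y) * C = t \<cdot>\<^sub>m (A + B * X * C) + (1 - t) \<cdot>\<^sub>m (A + B * Y * C)"
    using A B C X Y
    by (simp add: mult_convex_comb_left[where a = n and b = n and c = n]
        mult_convex_comb_right[where a = n and b = n and c = n] add_convex_comb_left[where a = n and b = n])
  then show ?thesis
    unfolding kappa_inv_def using A B C X Y
    by (simp add: toeplitz_bidiag_convex_comb mult_convex_comb_left[where a = "n * N" and b = "n * N" and c = "n * N"]
        mult_convex_comb_right[where a = "n * N" and b = "n * N" and c = "n * N"]
        add_convex_comb_right[where a = "n * N" and b = "n * N"])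
qed

section \<open>Strong convexity\<close>

lemma frob_norm_sq: "(frob_norm M)\<^sup>2 = frob_norm_sq M"
  unfolding frob_norm_def frob_norm_sq_def by (simp add: sum_nonneg)

lemma frob_norm_sq_convex_comb:
  fixes X Y :: "real mat"
  assumes X: "X \<in> carrier_mat a b" and Y: "Y \<in> carrier_mat a b"
  shows "(frob_norm (t \<cdot>\<^sub>m X + (1 - t) \<cdot>\<^sub>m Y))\<^sup>2 =
     t * (frob_norm X)\<^sup>2 + (1 - t) * (frob_norm Y)\<^sup>2 - t * (1 - t) * (frob_norm (X - Y))\<^sup>2"
proof -
  have e: "(t * x + (1 - t) * y)\<^sup>2 = t * x\<^sup>2 + (1 - t) * y\<^sup>2 - t * (1 - t) * (x - y)\<^sup>2" for x y :: real
    by (simp add: power2_eq_square algebra_simps)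
  show ?thesis
    unfolding frob_norm_sq frob_norm_sq_def using X Y
    by (simp add: e sum.distrib sum_subtractf sum_distrib_left)
qed

lemma strongly_convex_on_mat_add_frob_norm_sq:
  assumes \<eta>: "0 < \<eta>"
    and g: "\<And>X Y t. X \<in> carrier_mat n m \<Longrightarrow> Y \<in> carrier_mat n m \<Longrightarrow> 0 \<le> t \<Longrightarrow> t \<le> 1 \<Longrightarrow>
      g (t \<cdot>\<^sub>m X + (1 - t) \<cdot>\<^sub>m Y) \<le> t * g X + (1 - t) * g Y"
  shows "strongly_convex_on_mat n m (\<lambda>K. \<eta> * (frob_norm K)\<^sup>2 + g K)"
  unfolding strongly_convex_on_mat_def
proof (intro exI[of _ "2 * \<eta>"] conjI ballI allI impI)
  fix X Y :: "real mat" and t :: real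
  assume X: "X \<in> carrier_mat n m" and Y: "Y \<in> carrier_mat n m" and t: "0 \<le> t \<and> t \<le> 1"
  show "\<eta> * (frob_norm (t \<cdot>\<^sub>m X + (1 - t) \<cdot>\<^sub>m Y))\<^sup>2 + g (t \<cdot>\<^sub>m X + (1 - t) \<cdot>\<^sub>m Y)
      \<le> t * (\<eta> * (frob_norm X)\<^sup>2 + g X) + (1 - t) * (\<eta> * (frob_norm Y)\<^sup>2 + g Y)
        - 2 * \<eta> / 2 * t * (1 - t) * (frob_norm (X - Y))\<^sup>2"
    using g[OF X Y] t unfolding frob_norm_sq_convex_comb[OF X Y] by (simp add: algebra_simps)
qed (use \<eta> in simp)

lemma strongly_convex_on_mat_cong:
  assumes "\<And>K. K \<in> carrier_mat n m \<Longrightarrow> f K = g K"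
  shows "strongly_convex_on_mat n m f \<longleftrightarrow> strongly_convex_on_mat n m g"
proof -
  have "t \<cdot>\<^sub>m X + (1 - t) \<cdot>\<^sub>m Y \<in> carrier_mat n m"
    if "X \<in> carrier_mat n m" "Y \<in> carrier_mat n m" for X Y and t :: real
    using that by simp
  then show ?thesis unfolding strongly_convex_on_mat_def using assms by simp
qed

lemma sum_sigma_from_2: "(\<Sum>i = 2..m. sigma M i) = (\<Sum>i\<in>{1..<m}. singular_values M ! i)"
  unfolding sigma_def by (rule sum.reindex_bij_witness[of _ Suc "\<lambda>i. i - 1"]) auto

lemma invertible_mat_right_inverse:
  fixes B :: "real mat"
  assumes B: "B \<in> carrier_mat n n" and "invertible_mat B"
  obtains Bi where "Bi \<in> carrier_mat n n" "B * Bi = 1\<^sub>m n"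
proof -
  obtain Bi where BBi: "B * Bi = 1\<^sub>m (dim_row B)" and BiB: "Bi * B = 1\<^sub>m (dim_row Bi)"
    using assms(2) unfolding invertible_mat_def inverts_mat_def by blast
  have "dim_col Bi = n" using arg_cong[OF BBi, of dim_col] B by simp
  moreover have "dim_row Bi = n" using arg_cong[OF BiB, of dim_col] B by simp
  ultimately show ?thesis using that[of Bi] BBi B by auto
qed

theorem theorem2:
  fixes nx Nh :: nat and \<eta> :: real and A B C CJ L DA :: "real mat"
  assumes "0 < nx" and "0 < Nh" and "0 < \<eta>"
    and "A \<in> carrier_mat nx nx" and "B \<in> carrier_mat nx nx" and "C \<in> carrier_mat nx nx"
    and "CJ \<in> carrier_mat nx nx" and "L \<in> carrier_mat nx nx" and "DA \<in> carrier_mat nx nx"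
    and "invertible_mat B" and "invertible_mat C" and "invertible_mat CJ"
  shows "strongly_convex_on_mat nx nx (\<lambda>K. q_bar nx Nh \<eta> A B C CJ L DA K)"
proof -
  note mats = assms(4-9)
  obtain Bi where Bi: "Bi \<in> carrier_mat nx nx" "B * Bi = 1\<^sub>m nx"
    by (rule invertible_mat_right_inverse[OF mats(2) assms(10)])
  obtain Ci where Ci: "Ci \<in> carrier_mat nx nx" "C * Ci = 1\<^sub>m nx"
    by (rule invertible_mat_right_inverse[OF mats(3) assms(11)])
  obtain CJi where CJi: "CJi \<in> carrier_mat nx nx" "CJ * CJi = 1\<^sub>m nx"
    by (rule invertible_mat_right_inverse[OF mats(4) assms(12)])
  let ?g = "\<lambda>K. \<Sum>i\<in>{1..<nx * Nh}. singular_values (kappa_inv nx Nh A B C CJi L DA K) ! i"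
  have q_bar: "q_bar nx Nh \<eta> A B C CJ L DA K = \<eta> * (frob_norm K)\<^sup>2 + ?g K" if "K \<in> carrier_mat nx nx" for K
    unfolding q_bar_def Let_def minv_kappa[OF mats(1-6) that Bi Ci CJi] sum_sigma_from_2 ..
  have "strongly_convex_on_mat nx nx (\<lambda>K. \<eta> * (frob_norm K)\<^sup>2 + ?g K)"
  proof (rule strongly_convex_on_mat_add_frob_norm_sq[OF assms(3)])
    fix X Y :: "real mat" and t :: real
    assume X: "X \<in> carrier_mat nx nx" and Y: "Y \<in> carrier_mat nx nx" and t: "0 \<le> t" "t \<le> 1"
    show "?g (t \<cdot>\<^sub>m X + (1 - t) \<cdot>\<^sub>m Y) \<le> t * ?g X + (1 - t) * ?g Y"
      unfolding kappa_inv_convex_comb[OF mats(1-3,5,6) CJi(1) X Y]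
      by (intro sum_tail_singular_values_convex kappa_inv_carrier t)
  qed
  then show ?thesis by (subst strongly_convex_on_mat_cong[OF q_bar])
qed

end
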